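(* Let $\mathbf{C}$ be a category of $\mathbf{FI}$ type, and let $P,Q$ be character polynomials of respective degrees $\leq c_1$ and $\leq c_2$. Then the inner products $\langle P,Q\rangle_{G_d}=\frac{1}{|G_d|}\sum_{\sigma\in G_d}P(\sigma)\overline{Q(\sigma)}$ do not depend on $d$ for all objects $d\geq c_1+c_2$. Furthermore, if $P$ and $Q$ are characters of free $\mathbf{C}$-modules, then $\langle P,Q\rangle_{G_d}$ is a non-negative integer, monotonically non-decreasing in $d$.
   Context: A category $\mathbf{C}$ is of $\mathbf{FI}$ type if: (1) all Hom-sets are finite; (2) every morphism is a monomorphism and every endomorphism is an isomorphism; (3) for all objects $c,d$ the group $G_d=\mathrm{Aut}_{\mathbf{C}}(d)$ acts transitively on $\mathrm{Hom}_{\mathbf{C}}(c,d)$; (4) for every $d$ only finitely many isomorphism classes of $c$ have $\mathrm{Hom}(c,d)\neq\emptyset$; (5) every pair $c_1\to d\leftarrow c_2$ has a pullback, and every pair $f_i:p\to c_i$ has a weak push-out, i.e. a commutative pullback square $g_i:c_i\to d$ such that for every other pullback square $h_i:c_i\to z$ with $h_1f_1=h_2f_2$ there is a unique $h:d\to z$ with $hg_i=h_i$. Write $c\leq d$ if $\mathrm{Hom}(c,d)\neq\emptyset$. Write $d\geq c_1+c_2$ if $w\leq d$ for every weak push-out object $w$ of any pair of morphisms $p\to c_1$, $p\to c_2$. Binomial set: $\binom{d}{c}=\mathrm{Hom}(c,d)/G_c$. For a conjugacy class $\mu\subseteq G_c$ (write $|\mu|=c$), $\binom{X}{\mu}$ is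 the class function on every $G_d$ given by $\sigma\mapsto\#\{[f]\in\binom{d}{c}:\exists\psi\in\mu,\ \sigma f=f\psi\}$. A character polynomial is a $\mathbb{C}$-linear combination of these; degree $\leq d$ means each $\binom{X}{\mu}$ appearing nontrivially has $|\mu|\leq d$. For a finite-dimensional $G_c$-representation $V$, $\mathrm{Ind}_c(V)$ is $d\mapsto\mathbb{C}[\mathrm{Hom}(c,d)]\otimes_{\mathbb{C}[G_c]}V$; a free $\mathbf{C}$-module is a finite direct sum of these; its character assigns to $G_d$ the character of its value at $d$. *)

theory Defs
  imports Complex_Main "Jordan_Normal_Form.Matrix"
begin

text \<open>ccomp g f is the composite "g after f".\<close>
record ('o, 'm) cat =
  cOb :: "'o set"
  cHom :: "'o \<Rightarrow> 'o \<Rightarrow> 'm set"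
  ccomp :: "'m \<Rightarrow> 'm \<Rightarrow> 'm"
  cid :: "'o \<Rightarrow> 'm"

definition is_category :: "('o, 'm) cat \<Rightarrow> bool" where
  "is_category C \<longleftrightarrow>
     (\<forall>a\<in>cOb C. cid C a \<in> cHom C a a) \<and>
     (\<forall>a\<in>cOb C. \<forall>b\<in>cOb C. \<forall>c\<in>cOb C. \<forall>f\<in>cHom C a b. \<forall>g\<in>cHom C b c.
        ccomp C g f \<in> cHom C a c) \<and>
     (\<forall>a\<in>cOb C. \<forall>b\<in>cOb C. \<forall>f\<in>cHom C a b.
        ccomp C (cid C b) f = f \<and> ccomp C f (cid C a) = f) \<and>
     (\<forall>a\<in>cOb C. \<forall>b\<in>cOb C. \<forall>c\<in>cOb C. \<forall>d\<in>cOb C.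
        \<forall>f\<in>cHom C a b. \<forall>g\<in>cHom C b c. \<forall>h\<in>cHom C c d.
        ccomp C h (ccomp C g f) = ccomp C (ccomp C h g) f)"

definition is_mono :: "('o, 'm) cat \<Rightarrow> 'o \<Rightarrow> 'o \<Rightarrow> 'm \<Rightarrow> bool" where
  "is_mono C a b f \<longleftrightarrow> f \<in> cHom C a b \<and>
     (\<forall>e\<in>cOb C. \<forall>g\<in>cHom C e a. \<forall>h\<in>cHom C e a. ccomp C f g = ccomp C f h \<longrightarrow> g = h)"

definition is_iso :: "('o, 'm) cat \<Rightarrow> 'o \<Rightarrow> 'o \<Rightarrow> 'm \<Rightarrow> bool" where
  "is_iso C a b f \<longleftrightarrow> f \<in> cHom C a b \<and>
     (\<exists>g\<in>cHom C b a. ccomp C g f = cid C a \<and> ccomp C f g = cid C b)"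

definition isomorphic :: "('o, 'm) cat \<Rightarrow> 'o \<Rightarrow> 'o \<Rightarrow> bool" where
  "isomorphic C a b \<longleftrightarrow> (\<exists>f. is_iso C a b f)"

definition Aut :: "('o, 'm) cat \<Rightarrow> 'o \<Rightarrow> 'm set" where
  "Aut C d = {f. is_iso C d d f}"

definition is_pullback_square ::
  "('o, 'm) cat \<Rightarrow> 'o \<Rightarrow> 'o \<Rightarrow> 'o \<Rightarrow> 'o \<Rightarrow> 'm \<Rightarrow> 'm \<Rightarrow> 'm \<Rightarrow> 'm \<Rightarrow> bool" where
  "is_pullback_square C p c1 c2 d f1 f2 g1 g2 \<longleftrightarrow>
     f1 \<in> cHom C p c1 \<and> f2 \<in> cHom C p c2 \<and> g1 \<in> cHom C c1 d \<and> g2 \<in> cHom C c2 d \<and>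
     ccomp C g1 f1 = ccomp C g2 f2 \<and>
     (\<forall>z\<in>cOb C. \<forall>h1\<in>cHom C z c1. \<forall>h2\<in>cHom C z c2.
        ccomp C g1 h1 = ccomp C g2 h2 \<longrightarrow>
        (\<exists>!h. h \<in> cHom C z p \<and> ccomp C f1 h = h1 \<and> ccomp C f2 h = h2))"

definition is_weak_pushout ::
  "('o, 'm) cat \<Rightarrow> 'o \<Rightarrow> 'o \<Rightarrow> 'o \<Rightarrow> 'm \<Rightarrow> 'm \<Rightarrow> 'o \<Rightarrow> 'm \<Rightarrow> 'm \<Rightarrow> bool" where
  "is_weak_pushout C p c1 c2 f1 f2 d g1 g2 \<longleftrightarrow>
     d \<in> cOb C \<and> is_pullback_square C p c1 c2 d f1 f2 g1 g2 \<and>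
     (\<forall>z\<in>cOb C. \<forall>h1 h2. is_pullback_square C p c1 c2 z f1 f2 h1 h2 \<longrightarrow>
        (\<exists>!h. h \<in> cHom C d z \<and> ccomp C h g1 = h1 \<and> ccomp C h g2 = h2))"

definition FI_type :: "('o, 'm) cat \<Rightarrow> bool" where
  "FI_type C \<longleftrightarrow> is_category C \<and>
     \<comment> \<open>(1)\<close>
     (\<forall>c\<in>cOb C. \<forall>d\<in>cOb C. finite (cHom C c d)) \<and>
     \<comment> \<open>(2)\<close>
     (\<forall>c\<in>cOb C. \<forall>d\<in>cOb C. \<forall>f\<in>cHom C c d. is_mono C c d f) \<and>
     (\<forall>d\<in>cOb C. \<forall>f\<in>cHom C d d. is_iso C d d f) \<and>
     \<comment> \<open>(3)\<close>
     (\<forall>c\<in>cOb C. \<forall>d\<in>cOb C. \<forall>f\<in>cHom C c d. \<forall>g\<in>cHom C c d.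
        \<exists>\<sigma>\<in>Aut C d. ccomp C \<sigma> f = g) \<and>
     \<comment> \<open>(4)\<close>
     (\<forall>d\<in>cOb C. \<exists>F. finite F \<and> F \<subseteq> cOb C \<and>
        (\<forall>c\<in>cOb C. cHom C c d \<noteq> {} \<longrightarrow> (\<exists>c'\<in>F. isomorphic C c c'))) \<and>
     \<comment> \<open>(5) pullbacks\<close>
     (\<forall>c1\<in>cOb C. \<forall>c2\<in>cOb C. \<forall>d\<in>cOb C. \<forall>g1\<in>cHom C c1 d. \<forall>g2\<in>cHom C c2 d.
        \<exists>p\<in>cOb C. \<exists>f1 f2. is_pullback_square C p c1 c2 d f1 f2 g1 g2) \<and>
     \<comment> \<open>(5) weak push-outs\<close>
     (\<forall>p\<in>cOb C. \<forall>c1\<in>cOb C. \<forall>c2\<in>cOb C. \<forall>f1\<in>cHom C p c1. \<forall>f2\<in>cHom C p c2.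
        \<exists>d g1 g2. is_weak_pushout C p c1 c2 f1 f2 d g1 g2)"

definition obj_le :: "('o, 'm) cat \<Rightarrow> 'o \<Rightarrow> 'o \<Rightarrow> bool" where
  "obj_le C c d \<longleftrightarrow> cHom C c d \<noteq> {}"

definition obj_ge_sum :: "('o, 'm) cat \<Rightarrow> 'o \<Rightarrow> 'o \<Rightarrow> 'o \<Rightarrow> bool" where
  "obj_ge_sum C d c1 c2 \<longleftrightarrow>
     (\<forall>p\<in>cOb C. \<forall>f1\<in>cHom C p c1. \<forall>f2\<in>cHom C p c2. \<forall>w g1 g2.
        is_weak_pushout C p c1 c2 f1 f2 w g1 g2 \<longrightarrow> obj_le C w d)"

text \<open>binom(d, c) = Hom(c,d)/G_c, orbits under precomposition.\<close>
definition binom_set :: "('o, 'm) cat \<Rightarrow> 'o \<Rightarrow> 'o \<Rightarrow> 'm set set" where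
  "binom_set C d c = {{ccomp C f \<psi> | \<psi>. \<psi> \<in> Aut C c} | f. f \<in> cHom C c d}"

definition conj_class :: "('o, 'm) cat \<Rightarrow> 'o \<Rightarrow> 'm \<Rightarrow> 'm set" where
  "conj_class C c \<psi>0 = {\<psi> \<in> Aut C c. \<exists>\<tau>\<in>Aut C c. ccomp C \<tau> \<psi>0 = ccomp C \<psi> \<tau>}"

definition is_conj_class :: "('o, 'm) cat \<Rightarrow> 'o \<Rightarrow> 'm set \<Rightarrow> bool" where
  "is_conj_class C c \<mu> \<longleftrightarrow> (\<exists>\<psi>0\<in>Aut C c. \<mu> = conj_class C c \<psi>0)"

definition binomX :: "('o, 'm) cat \<Rightarrow> 'o \<Rightarrow> 'm set \<Rightarrow> 'o \<Rightarrow> 'm \<Rightarrow> complex" where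
  "binomX C c \<mu> d \<sigma> =
     of_nat (card {B \<in> binom_set C d c. \<exists>f\<in>B. \<exists>\<psi>\<in>\<mu>. ccomp C \<sigma> f = ccomp C f \<psi>})"

text \<open>P (a class function on every G_d, given as P d sigma) is a character polynomial
  of degree <= c: a finite C-linear combination of binomX mu_i with |mu_i| <= c.\<close>
definition char_poly_deg_le :: "('o, 'm) cat \<Rightarrow> ('o \<Rightarrow> 'm \<Rightarrow> complex) \<Rightarrow> 'o \<Rightarrow> bool" where
  "char_poly_deg_le C P c \<longleftrightarrow>
     (\<exists>(n::nat) (a :: nat \<Rightarrow> complex) (e :: nat \<Rightarrow> 'o) (\<mu> :: nat \<Rightarrow> 'm set).
        (\<forall>i<n. e i \<in> cOb C \<and> is_conj_class C (e i) (\<mu> i) \<and> obj_le C (e i) c) \<and>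
        (\<forall>d\<in>cOb C. \<forall>\<sigma>\<in>Aut C d. P d \<sigma> = (\<Sum>i<n. a i * binomX C (e i) (\<mu> i) d \<sigma>)))"

definition inner_G :: "('o, 'm) cat \<Rightarrow> ('o \<Rightarrow> 'm \<Rightarrow> complex) \<Rightarrow> ('o \<Rightarrow> 'm \<Rightarrow> complex) \<Rightarrow> 'o \<Rightarrow> complex" where
  "inner_G C P Q d = (1 / of_nat (card (Aut C d))) * (\<Sum>\<sigma>\<in>Aut C d. P d \<sigma> * cnj (Q d \<sigma>))"

definition mtrace :: "complex mat \<Rightarrow> complex" where
  "mtrace A = (\<Sum>i<dim_row A. A $$ (i, i))"

definition is_rep :: "('o, 'm) cat \<Rightarrow> 'o \<Rightarrow> nat \<Rightarrow> ('m \<Rightarrow> complex mat) \<Rightarrow> bool" where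
  "is_rep C c k \<rho> \<longleftrightarrow>
     (\<forall>\<psi>\<in>Aut C c. \<rho> \<psi> \<in> carrier_mat k k) \<and>
     \<rho> (cid C c) = 1\<^sub>m k \<and>
     (\<forall>\<psi>\<in>Aut C c. \<forall>\<psi>'\<in>Aut C c. \<rho> (ccomp C \<psi> \<psi>') = \<rho> \<psi> * \<rho> \<psi>')"

text \<open>Character of Ind_c(V) = C[Hom(c,-)] \<otimes>_{C[G_c]} V at sigma in G_d.
  Since G_c acts freely on Hom(c,d) (all maps are monic), Ind_c(V)(d) is the direct
  sum over the orbits [f] of copies f \<otimes> V, and sigma maps the summand of [f] to that
  of [sigma f]; so the trace is the sum over orbits [f] with sigma f = f psi of
  chi_V(psi). We write it as an average over all f in Hom(c,d).\<close>
definition ind_char :: "('o, 'm) cat \<Rightarrow> 'o \<Rightarrow> ('m \<Rightarrow> complex mat) \<Rightarrow> 'o \<Rightarrow> 'm \<Rightarrow> complex" where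
  "ind_char C c \<rho> d \<sigma> =
     (1 / of_nat (card (Aut C c))) *
     (\<Sum>f\<in>cHom C c d.
        if (\<exists>\<psi>\<in>Aut C c. ccomp C \<sigma> f = ccomp C f \<psi>)
        then mtrace (\<rho> (THE \<psi>. \<psi> \<in> Aut C c \<and> ccomp C \<sigma> f = ccomp C f \<psi>))
        else 0)"

text \<open>P is the character of a free C-module, i.e. of a finite direct sum of Ind_{c_i}(V_i).\<close>
definition is_free_char :: "('o, 'm) cat \<Rightarrow> ('o \<Rightarrow> 'm \<Rightarrow> complex) \<Rightarrow> bool" where
  "is_free_char C P \<longleftrightarrow>
     (\<exists>(n::nat) (e :: nat \<Rightarrow> 'o) (k :: nat \<Rightarrow> nat) (\<rho> :: nat \<Rightarrow> 'm \<Rightarrow> complex mat).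
        (\<forall>i<n. e i \<in> cOb C \<and> is_rep C (e i) (k i) (\<rho> i)) \<and>
        (\<forall>d\<in>cOb C. \<forall>\<sigma>\<in>Aut C d. P d \<sigma> = (\<Sum>i<n. ind_char C (e i) (\<rho> i) d \<sigma>)))"

end

(*
  Every character polynomial, and every character of a free module, is a linear combination of
  class functions Ind_c phi on the groups G_d, induced along Hom(c, -) from class functions phi on G_c.
  The inner product of Ind_a phi and Ind_b chi on G_d is a sum over the orbits of G_d x G_a x G_b on
  the pairs a -> d <- b, each orbit contributing the average of phi(p) * conj(chi(q)) over the
  stabilizer {(sigma, p, q)} of one of its pairs. This average, and the orbit itself, are determined
  by the pullback of the pair: weak push-outs and the transitivity of G_d on Hom(w, d) show that two
  pairs with a common pullback have matching stabilizers and lie in matching orbits. If d >= c1 + c2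
  and a <= c1, b <= c2, the pullback of any pair a -> e <- b is also the pullback of a pair into d
  (through a weak push-out over c1 and c2), so the sum does not depend on d. For free modules each contribution is an inner product of characters of two representations
  of the stabilizer, hence a natural number (the trace of an idempotent), and an embedding d -> d'
  maps orbits injectively, which gives monotonicity.
*)
theory Submission
  imports Defs "HOL-Algebra.Multiplicative_Group" "HOL-Algebra.Group_Action" "Jordan_Normal_Form.Schur_Decomposition"
begin

section \<open>Traces and characters of matrix representations\<close>

lemma mtrace_mult_comm:
  assumes A: "(A::complex mat) \<in> carrier_mat n m" and B: "B \<in> carrier_mat m n"
  shows "mtrace (A * B) = mtrace (B * A)"
proof -
  have "mtrace (A * B) = (\<Sum>i<n. \<Sum>j<m. A $$ (i,j) * B $$ (j,i))"
    using A B by (simp add: mtrace_def scalar_prod_def row_def col_def atLeast0LessThan)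
  also have "\<dots> = (\<Sum>j<m. \<Sum>i<n. B $$ (j,i) * A $$ (i,j))"
    by (subst sum.swap) (simp add: mult.commute)
  also have "\<dots> = mtrace (B * A)"
    using A B by (simp add: mtrace_def scalar_prod_def row_def col_def atLeast0LessThan)
  finally show ?thesis .
qed

lemma mat_mult_entry:
  assumes "(A::complex mat) \<in> carrier_mat n m" "B \<in> carrier_mat m l" "i < n" "j < l"
  shows "(A * B) $$ (i,j) = (\<Sum>t<m. A $$ (i,t) * B $$ (t,j))"
  using assms by (simp add: scalar_prod_def row_def col_def atLeast0LessThan)

lemma upper_triangular_mult_diag:
  assumes A: "(A::complex mat) \<in> carrier_mat n n" and B: "B \<in> carrier_mat n n"
    and uA: "upper_triangular A" and uB: "upper_triangular B"
  shows "upper_triangular (A * B)" and "\<And>i. i < n \<Longrightarrow> (A * B) $$ (i,i) = A $$ (i,i) * B $$ (i,i)"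
proof -
  have vanish: "A $$ (i,l) * B $$ (l,j) = 0" if "i < n" "l < n" "j < n" "j < i \<or> l \<noteq> i \<and> j = i" for i j l
    using uA uB A B that by (cases "l < i") (auto simp: upper_triangular_def)
  show "upper_triangular (A * B)"
  proof
    fix i j assume ij: "j < i" "i < dim_row (A * B)"
    then have "(A * B) $$ (i,j) = (\<Sum>l<n. A $$ (i,l) * B $$ (l,j))"
      using mat_mult_entry[OF A B, of i j] A by simp
    also have "\<dots> = 0" using A ij vanish by (intro sum.neutral) auto
    finally show "(A * B) $$ (i,j) = 0" .
  qed
  show "(A * B) $$ (i,i) = A $$ (i,i) * B $$ (i,i)" if "i < n" for i
  proof -
    have "(A * B) $$ (i,i) = (\<Sum>l<n. A $$ (i,l) * B $$ (l,i))"
      using mat_mult_entry[OF A B that that] .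
    also have "\<dots> = (\<Sum>l\<in>{i}. A $$ (i,l) * B $$ (l,i))"
      by (rule sum.mono_neutral_right) (use that vanish in auto)
    finally show ?thesis by simp
  qed
qed

lemma upper_triangular_pow_diag:
  assumes A: "(A::complex mat) \<in> carrier_mat n n" and uA: "upper_triangular A"
  shows "upper_triangular (A ^\<^sub>m m) \<and> (\<forall>i<n. (A ^\<^sub>m m) $$ (i,i) = (A $$ (i,i)) ^ m)"
proof (induction m)
  case 0
  then show ?case using A by auto
next
  case (Suc m)
  have "A ^\<^sub>m m \<in> carrier_mat n n" using A by auto
  from upper_triangular_mult_diag[OF this A] Suc uA show ?case by auto
qed

lemma mtrace_similar:
  assumes "similar_mat_wit (A::complex mat) B P Q"
  shows "mtrace A = mtrace B"
proof -
  obtain n where n: "A \<in> carrier_mat n n" "B \<in> carrier_mat n n" "P \<in> carrier_mat n n" "Q \<in> carrier_mat n n"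
    "Q * P = 1\<^sub>m n" "A = P * B * Q"
    using assms unfolding similar_mat_wit_def Let_def by auto
  have "mtrace A = mtrace (P * (B * Q))" using n by (simp add: assoc_mult_mat[of P n n B n Q n])
  also have "\<dots> = mtrace ((B * Q) * P)" using n by (intro mtrace_mult_comm) auto
  also have "(B * Q) * P = B" using n by (simp add: assoc_mult_mat[of B n n Q n P n])
  finally show ?thesis .
qed

text \<open>The \<open>ev i\<close> are the eigenvalues of \<open>A\<close>, read off the diagonal of a Schur triangularization.\<close>
lemma eigenvalue_power_sums:
  assumes A: "(A::complex mat) \<in> carrier_mat n n"
  obtains ev :: "nat \<Rightarrow> complex"
  where "\<And>m. mtrace (A ^\<^sub>m m) = (\<Sum>i<n. ev i ^ m)"
    and "\<And>k l i. A ^\<^sub>m k = A ^\<^sub>m l \<Longrightarrow> i < n \<Longrightarrow> ev i ^ k = ev i ^ l"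
proof -
  obtain es where "char_poly A = (\<Prod>a \<leftarrow> es. [:- a, 1:])"
    using char_poly_factorized[OF A] by blast
  from schur_decomposition_exists[OF A this]
  obtain T P Q where T: "T \<in> carrier_mat n n" "upper_triangular T" and w: "similar_mat_wit A T P Q"
    by (auto simp: similar_mat_def)
  have Tpow: "T ^\<^sub>m m = Q * A ^\<^sub>m m * P" for m
    using similar_mat_wit_pow_id[OF similar_mat_wit_sym[OF w]] .
  have diag: "(T ^\<^sub>m m) $$ (i,i) = T $$ (i,i) ^ m" if "i < n" for m i
    using upper_triangular_pow_diag[OF T] that by blast
  show thesis
  proof
    show "mtrace (A ^\<^sub>m m) = (\<Sum>i<n. T $$ (i,i) ^ m)" for m
    proof -
      have "mtrace (A ^\<^sub>m m) = mtrace (T ^\<^sub>m m)"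
        using mtrace_similar[OF similar_mat_wit_pow[OF w]] .
      then show ?thesis using T diag by (simp add: mtrace_def)
    qed
    show "T $$ (i,i) ^ k = T $$ (i,i) ^ l" if "A ^\<^sub>m k = A ^\<^sub>m l" "i < n" for k l i
      using diag[of i k] diag[of i l] Tpow[of k] Tpow[of l] that by simp
  qed
qed

lemma idempotent_mtrace_nat:
  assumes E: "(E::complex mat) \<in> carrier_mat n n" and EE: "E * E = E"
  shows "\<exists>m::nat. mtrace E = of_nat m"
proof -
  obtain ev where tr: "\<And>m. mtrace (E ^\<^sub>m m) = (\<Sum>i<n. ev i ^ m)"
    and ev_pow: "\<And>k l i. E ^\<^sub>m k = E ^\<^sub>m l \<Longrightarrow> i < n \<Longrightarrow> ev i ^ k = ev i ^ l"
    using eigenvalue_power_sums[OF E] by blast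
  have "E ^\<^sub>m 2 = E ^\<^sub>m 1" using E EE by (simp add: numeral_2_eq_2)
  then have "ev i = of_nat (if ev i = 1 then 1 else 0)" if "i < n" for i
    using ev_pow[of 2 1 i] that by (auto simp: power2_eq_square)
  then have "mtrace E = of_nat (\<Sum>i<n. if ev i = 1 then 1 else 0)"
    using tr[of 1] E by simp
  then show ?thesis by blast
qed

lemma cnj_mtrace_finite_order:
  assumes A: "(A::complex mat) \<in> carrier_mat n n" and N: "N > 0" and AN: "A ^\<^sub>m N = 1\<^sub>m n"
  shows "cnj (mtrace A) = mtrace (A ^\<^sub>m (N - 1))"
proof -
  obtain ev where tr: "\<And>m. mtrace (A ^\<^sub>m m) = (\<Sum>i<n. ev i ^ m)"
    and ev_pow: "\<And>k l i. A ^\<^sub>m k = A ^\<^sub>m l \<Longrightarrow> i < n \<Longrightarrow> ev i ^ k = ev i ^ l"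
    using eigenvalue_power_sums[OF A] by blast
  have cnj_ev: "cnj (ev i) = ev i ^ (N - 1)" if "i < n" for i
  proof -
    have unit: "ev i ^ N = 1" using ev_pow[of N 0 i] AN A that by simp
    then have "cmod (ev i) ^ N = 1" by (metis norm_one norm_power)
    then have "cmod (ev i) = 1" using N power_eq_imp_eq_base[of "cmod (ev i)" N 1] by simp
    then have "ev i * cnj (ev i) = 1" by (simp add: complex_norm_square[symmetric])
    moreover have "ev i * ev i ^ (N - 1) = 1" using unit N by (cases N) auto
    ultimately show ?thesis by (metis mult.left_commute mult.right_neutral)
  qed
  show ?thesis using tr[of 1] tr[of "N - 1"] A cnj_ev by (simp add: cnj_sum)
qed

definition mat_rep :: "('g, 'x) monoid_scheme \<Rightarrow> nat \<Rightarrow> ('g \<Rightarrow> complex mat) \<Rightarrow> bool" where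
  "mat_rep G k \<rho> \<longleftrightarrow> (\<forall>h\<in>carrier G. \<rho> h \<in> carrier_mat k k) \<and> \<rho> \<one>\<^bsub>G\<^esub> = 1\<^sub>m k \<and>
     (\<forall>x\<in>carrier G. \<forall>y\<in>carrier G. \<rho> (x \<otimes>\<^bsub>G\<^esub> y) = \<rho> x * \<rho> y)"

lemma (in group) mat_rep_pow:
  assumes r: "mat_rep G k \<rho>" and h: "h \<in> carrier G"
  shows "\<rho> (h [^] (m::nat)) = \<rho> h ^\<^sub>m m"
proof (induction m)
  case 0
  have "\<rho> h \<in> carrier_mat k k" using r h by (simp add: mat_rep_def)
  then show ?case using r by (simp add: mat_rep_def)
next
  case (Suc m)
  have "\<rho> (h [^] Suc m) = \<rho> (h [^] m) * \<rho> h" using r h by (simp add: mat_rep_def)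
  then show ?case using Suc by simp
qed

lemma (in group) cnj_mtrace_mat_rep:
  assumes fin: "finite (carrier G)" and r: "mat_rep G k \<rho>" and h: "h \<in> carrier G"
  shows "cnj (mtrace (\<rho> h)) = mtrace (\<rho> (inv h))"
proof -
  define N where "N = Coset.order G"
  have N: "N > 0" using fin by (simp add: order_gt_0_iff_finite N_def)
  have hN: "h [^] N = \<one>" using pow_order_eq_1[OF h] by (simp add: N_def)
  have rh: "\<rho> h \<in> carrier_mat k k" using r h by (simp add: mat_rep_def)
  have "\<rho> h ^\<^sub>m N = 1\<^sub>m k" using mat_rep_pow[OF r h, of N] hN r by (simp add: mat_rep_def)
  then have "cnj (mtrace (\<rho> h)) = mtrace (\<rho> h ^\<^sub>m (N - 1))"
    using cnj_mtrace_finite_order[OF rh N] by simp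
  also have "\<rho> h ^\<^sub>m (N - 1) = \<rho> (inv h)"
  proof -
    have "h [^] (N - 1) \<otimes> h = \<one>" using hN N h by (metis Suc_diff_1 nat_pow_Suc)
    then have "h [^] (N - 1) = inv h" using h by (simp add: inv_equality)
    then show ?thesis using mat_rep_pow[OF r h, of "N - 1"] by simp
  qed
  finally show ?thesis .
qed

lemma sum_div_mod_pairs:
  fixes f :: "nat \<Rightarrow> nat \<Rightarrow> 'a::comm_monoid_add"
  shows "(\<Sum>r<k*k'. f (r div k') (r mod k')) = (\<Sum>i<k. \<Sum>j<k'. f i j)"
proof -
  have enc: "i * k' + j < k * k'" if "i < k" "j < k'" for i j
  proof -
    have "i * k' + j < (i + 1) * k'" using that by simp
    also have "\<dots> \<le> k * k'" using that by (intro mult_right_mono) auto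
    finally show ?thesis .
  qed
  have mod_less: "r mod k' < k'" if "r < k * k'" for r
    using that by (cases "k' = 0") auto
  have "(\<Sum>r<k*k'. f (r div k') (r mod k')) = (\<Sum>(i,j)\<in>{..<k} \<times> {..<k'}. f i j)"
    by (rule sum.reindex_bij_witness[where i = "\<lambda>(i,j). i*k'+j" and j = "\<lambda>r. (r div k', r mod k')"])
      (auto simp: less_mult_imp_div_less enc mod_less)
  then show ?thesis by (simp add: sum.cartesian_product)
qed

text \<open>Entries of the matrix of \<open>\<rho> h \<otimes> \<rho>' (inv h)\<^sup>T\<close>, the tensor product of \<open>\<rho>\<close> with the dual
  of \<open>\<rho>'\<close>; row and column indices below \<open>k * k'\<close> encode pairs of indices via \<open>div\<close> and \<open>mod k'\<close>.\<close>
definition dual_tensor_entry ::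
  "('g, 'x) monoid_scheme \<Rightarrow> ('g \<Rightarrow> complex mat) \<Rightarrow> ('g \<Rightarrow> complex mat) \<Rightarrow> nat \<Rightarrow> 'g \<Rightarrow> nat \<Rightarrow> nat \<Rightarrow> complex"
  where "dual_tensor_entry G \<rho> \<rho>' k' h r s =
    \<rho> h $$ (r div k', s div k') * \<rho>' (inv\<^bsub>G\<^esub> h) $$ (s mod k', r mod k')"

lemma (in group) dual_tensor_entry_mult:
  assumes r: "mat_rep G k \<rho>" and r': "mat_rep G k' \<rho>'" and h: "h \<in> carrier G" and g: "g \<in> carrier G"
    and rs: "r < k * k'" "s < k * k'"
  shows "(\<Sum>t<k*k'. dual_tensor_entry G \<rho> \<rho>' k' h r t * dual_tensor_entry G \<rho> \<rho>' k' g t s)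
       = dual_tensor_entry G \<rho> \<rho>' k' (h \<otimes> g) r s"
proof -
  have rd: "r div k' < k" "s div k' < k" using rs by (auto simp: less_mult_imp_div_less)
  have rm: "r mod k' < k'" "s mod k' < k'" using rs by (metis mod_less_divisor mult_0_right neq0_conv not_less0)+
  have c: "\<rho> h \<in> carrier_mat k k" "\<rho> g \<in> carrier_mat k k"
    "\<rho>' (inv h) \<in> carrier_mat k' k'" "\<rho>' (inv g) \<in> carrier_mat k' k'"
    using r r' h g by (auto simp: mat_rep_def)
  have "(\<Sum>t<k*k'. dual_tensor_entry G \<rho> \<rho>' k' h r t * dual_tensor_entry G \<rho> \<rho>' k' g t s)
     = (\<Sum>i<k. \<Sum>j<k'. (\<rho> h $$ (r div k', i) * \<rho> g $$ (i, s div k')) *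
                       (\<rho>' (inv g) $$ (s mod k', j) * \<rho>' (inv h) $$ (j, r mod k')))"
    by (subst sum_div_mod_pairs[symmetric]) (simp add: dual_tensor_entry_def mult_ac)
  also have "\<dots> = (\<Sum>i<k. \<rho> h $$ (r div k', i) * \<rho> g $$ (i, s div k')) *
                  (\<Sum>j<k'. \<rho>' (inv g) $$ (s mod k', j) * \<rho>' (inv h) $$ (j, r mod k'))"
    by (simp add: sum_product)
  also have "\<dots> = (\<rho> h * \<rho> g) $$ (r div k', s div k') * (\<rho>' (inv g) * \<rho>' (inv h)) $$ (s mod k', r mod k')"
    by (simp add: mat_mult_entry[OF c(1,2) rd] mat_mult_entry[OF c(4,3) rm(2,1)])
  also have "\<dots> = dual_tensor_entry G \<rho> \<rho>' k' (h \<otimes> g) r s"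
    using r r' h g by (simp add: mat_rep_def inv_mult_group dual_tensor_entry_def)
  finally show ?thesis .
qed

lemma (in group) sum_carrier_translate:
  assumes h: "h \<in> carrier G"
  shows "(\<Sum>g\<in>carrier G. f (h \<otimes> g)) = (\<Sum>g\<in>carrier G. f g)"
  using sum.reindex[OF inj_on_cmult[OF h], of f] surj_const_mult[OF h] by (simp add: comp_def)

definition dual_tensor_average ::
  "('g, 'x) monoid_scheme \<Rightarrow> ('g \<Rightarrow> complex mat) \<Rightarrow> ('g \<Rightarrow> complex mat) \<Rightarrow> nat \<Rightarrow> nat \<Rightarrow> complex mat"
  where "dual_tensor_average G \<rho> \<rho>' k k' = mat (k * k') (k * k')
    (\<lambda>(r,s). (\<Sum>h\<in>carrier G. dual_tensor_entry G \<rho> \<rho>' k' h r s) / of_nat (Coset.order G))"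

text \<open>The average is the projection onto the invariants of \<open>\<rho> \<otimes> \<rho>'\<^sup>*\<close>.\<close>
lemma (in group) dual_tensor_average_idempotent:
  assumes fin: "finite (carrier G)" and r: "mat_rep G k \<rho>" and r': "mat_rep G k' \<rho>'"
  defines "E \<equiv> dual_tensor_average G \<rho> \<rho>' k k'"
  shows "E * E = E"
proof (rule eq_matI)
  let ?K = "k * k'" and ?n = "of_nat (Coset.order G) :: complex"
  let ?T = "dual_tensor_entry G \<rho> \<rho>' k'"
  let ?S = "\<lambda>r s. \<Sum>h\<in>carrier G. ?T h r s"
  have E: "E \<in> carrier_mat ?K ?K" by (simp add: E_def dual_tensor_average_def)
  have n: "?n \<noteq> 0" using fin by (simp add: order_gt_0_iff_finite)
  fix r s assume "r < dim_row E" "s < dim_col E"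
  then have rs: "r < ?K" "s < ?K" by (auto simp: E_def dual_tensor_average_def)
  have "(\<Sum>t<?K. ?S r t * ?S t s) = (\<Sum>t<?K. \<Sum>h\<in>carrier G. \<Sum>g\<in>carrier G. ?T h r t * ?T g t s)"
    by (simp add: sum_product)
  also have "\<dots> = (\<Sum>h\<in>carrier G. \<Sum>g\<in>carrier G. \<Sum>t<?K. ?T h r t * ?T g t s)"
    by (subst sum.swap) (rule sum.cong[OF refl], rule sum.swap)
  also have "\<dots> = (\<Sum>h\<in>carrier G. \<Sum>g\<in>carrier G. ?T (h \<otimes> g) r s)"
    using rs by (simp add: dual_tensor_entry_mult[OF r r'])
  also have "\<dots> = ?n * ?S r s"
    using sum_carrier_translate[of _ "\<lambda>x. ?T x r s"] by (simp add: Coset.order_def)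
  finally have S: "(\<Sum>t<?K. ?S r t * ?S t s) = ?n * ?S r s" .
  have "(E * E) $$ (r,s) = (\<Sum>t<?K. E $$ (r,t) * E $$ (t,s))"
    using mat_mult_entry[OF E E rs] .
  also have "\<dots> = (\<Sum>t<?K. ?S r t * ?S t s) / (?n * ?n)"
    using rs by (simp add: E_def dual_tensor_average_def sum_divide_distrib[symmetric] times_divide_times_eq)
  also have "\<dots> = E $$ (r,s)"
    using rs n S by (simp add: E_def dual_tensor_average_def)
  finally show "(E * E) $$ (r,s) = E $$ (r,s)" .
qed (simp_all add: E_def dual_tensor_average_def)

lemma (in group) mtrace_dual_tensor_average:
  assumes fin: "finite (carrier G)" and r: "mat_rep G k \<rho>" and r': "mat_rep G k' \<rho>'"
  shows "mtrace (dual_tensor_average G \<rho> \<rho>' k k')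
       = (\<Sum>h\<in>carrier G. mtrace (\<rho> h) * cnj (mtrace (\<rho>' h))) / of_nat (Coset.order G)"
proof -
  let ?T = "dual_tensor_entry G \<rho> \<rho>' k'" and ?n = "of_nat (Coset.order G) :: complex"
  have diag: "(\<Sum>r<k*k'. ?T h r r) = mtrace (\<rho> h) * cnj (mtrace (\<rho>' h))"
    if h: "h \<in> carrier G" for h
  proof -
    have "\<rho> h \<in> carrier_mat k k" "\<rho>' (inv h) \<in> carrier_mat k' k'" using r r' h by (auto simp: mat_rep_def)
    then have "(\<Sum>r<k*k'. dual_tensor_entry G \<rho> \<rho>' k' h r r) = mtrace (\<rho> h) * mtrace (\<rho>' (inv h))"
      using sum_div_mod_pairs[where f = "\<lambda>i j. \<rho> h $$ (i,i) * \<rho>' (inv h) $$ (j,j)" and k = k and k' = k']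
      by (simp add: dual_tensor_entry_def mtrace_def sum_product)
    then show ?thesis using cnj_mtrace_mat_rep[OF fin r' h] by simp
  qed
  have "mtrace (dual_tensor_average G \<rho> \<rho>' k k') = (\<Sum>r<k*k'. (\<Sum>h\<in>carrier G. ?T h r r) / ?n)"
    by (simp add: mtrace_def dual_tensor_average_def)
  also have "\<dots> = (\<Sum>h\<in>carrier G. \<Sum>r<k*k'. ?T h r r) / ?n"
    by (subst sum.swap) (simp add: sum_divide_distrib)
  finally show ?thesis using diag by simp
qed

lemma (in group) character_inner_nat:
  assumes fin: "finite (carrier G)" and r: "mat_rep G k \<rho>" and r': "mat_rep G k' \<rho>'"
  shows "\<exists>n::nat. (\<Sum>h\<in>carrier G. mtrace (\<rho> h) * cnj (mtrace (\<rho>' h))) / of_nat (Coset.order G) = of_nat n"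
proof -
  have "dual_tensor_average G \<rho> \<rho>' k k' \<in> carrier_mat (k * k') (k * k')"
    by (simp add: dual_tensor_average_def)
  from idempotent_mtrace_nat[OF this dual_tensor_average_idempotent[OF fin r r']]
  show ?thesis using mtrace_dual_tensor_average[OF fin r r'] by simp
qed

section \<open>Sums over partitions and group actions\<close>

lemma group_actionI:
  assumes G: "group G"
    and closed: "\<And>g x. g \<in> carrier G \<Longrightarrow> x \<in> E \<Longrightarrow> act g x \<in> E"
    and one: "\<And>x. x \<in> E \<Longrightarrow> act \<one>\<^bsub>G\<^esub> x = x"
    and mult: "\<And>g h x. g \<in> carrier G \<Longrightarrow> h \<in> carrier G \<Longrightarrow> x \<in> E \<Longrightarrow>
      act (g \<otimes>\<^bsub>G\<^esub> h) x = act g (act h x)"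
  shows "group_action G E (\<lambda>g. \<lambda>x\<in>E. act g x)"
proof -
  interpret G: group G by (rule G)
  have bij: "(\<lambda>x\<in>E. act g x) \<in> Bij E" if g: "g \<in> carrier G" for g
  proof -
    have "bij_betw (\<lambda>x\<in>E. act g x) E E"
    proof (rule bij_betw_byWitness[where f' = "act (inv\<^bsub>G\<^esub> g)"])
      show "\<forall>x\<in>E. act (inv\<^bsub>G\<^esub> g) ((\<lambda>x\<in>E. act g x) x) = x"
        using g mult[of "inv\<^bsub>G\<^esub> g" g] one by simp
      show "\<forall>x\<in>E. (\<lambda>x\<in>E. act g x) (act (inv\<^bsub>G\<^esub> g) x) = x"
        using g mult[of g "inv\<^bsub>G\<^esub> g"] one closed by simp
    qed (use closed g in auto)
    then show ?thesis by (simp add: Bij_def)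
  qed
  show ?thesis
    unfolding group_action_def
  proof (rule group_hom.intro[OF G group_BijGroup], rule group_hom_axioms.intro, rule homI)
    show "(\<lambda>x\<in>E. act g x) \<in> carrier (BijGroup E)" if "g \<in> carrier G" for g
      using bij that by (simp add: BijGroup_def)
    show "(\<lambda>x\<in>E. act (g \<otimes>\<^bsub>G\<^esub> h) x) = (\<lambda>x\<in>E. act g x) \<otimes>\<^bsub>BijGroup E\<^esub> (\<lambda>x\<in>E. act h x)"
      if "g \<in> carrier G" "h \<in> carrier G" for g h
      using that bij mult closed by (auto simp: BijGroup_def compose_def)
  qed
qed

lemma average_uniform_fibres:
  assumes fin: "finite A" and fibres: "\<And>y. y \<in> h ` A \<Longrightarrow> card {x\<in>A. h x = y} = k"
  shows "(\<Sum>x\<in>A. F (h x)) / of_nat (card A) = (\<Sum>y\<in>h ` A. F y) / (of_nat (card (h ` A)) :: complex)"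
proof (cases "A = {}")
  case False
  have "(\<Sum>x\<in>A. F (h x)) = (\<Sum>y\<in>h ` A. \<Sum>x\<in>{x\<in>A. h x = y}. F (h x))"
    by (rule sum.image_gen[OF fin])
  also have "\<dots> = of_nat k * (\<Sum>y\<in>h ` A. F y)"
    by (simp add: fibres sum_distrib_left)
  finally have sum: "(\<Sum>x\<in>A. F (h x)) = of_nat k * (\<Sum>y\<in>h ` A. F y)" .
  have "card A = (\<Sum>y\<in>h ` A. card {x\<in>A. h x = y})"
    using sum.image_gen[OF fin, of "\<lambda>_. 1::nat" h] by simp
  then have card: "card A = k * card (h ` A)" using fibres by simp
  moreover have "card A > 0" using False fin by (simp add: card_gt_0_iff)
  ultimately have "k > 0" "card (h ` A) > 0" by auto
  then show ?thesis using sum card by simp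
qed simp

lemma sum_partition_via_relation:
  fixes NA :: "'x set \<Rightarrow> complex" and NB :: "'y set \<Rightarrow> complex"
  assumes total: "\<forall>A\<in>OA. \<exists>x\<in>A. \<exists>B\<in>OB. \<exists>y\<in>B. R x y"
    and match: "\<And>A A' B B' x x' y y'. A \<in> OA \<Longrightarrow> A' \<in> OA \<Longrightarrow> B \<in> OB \<Longrightarrow> B' \<in> OB \<Longrightarrow>
       x \<in> A \<Longrightarrow> x' \<in> A' \<Longrightarrow> y \<in> B \<Longrightarrow> y' \<in> B' \<Longrightarrow> R x y \<Longrightarrow> R x' y' \<Longrightarrow> A = A' \<longleftrightarrow> B = B'"
    and val: "\<And>A B x y. A \<in> OA \<Longrightarrow> B \<in> OB \<Longrightarrow> x \<in> A \<Longrightarrow> y \<in> B \<Longrightarrow> R x y \<Longrightarrow> NA A = NB B"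
  shows "\<exists>S\<subseteq>OB. sum NA OA = sum NB S \<and> ((\<forall>B\<in>OB. \<exists>y\<in>B. \<exists>A\<in>OA. \<exists>x\<in>A. R x y) \<longrightarrow> S = OB)"
proof -
  define m where "m A = (SOME B. B \<in> OB \<and> (\<exists>x\<in>A. \<exists>y\<in>B. R x y))" for A
  have m: "m A \<in> OB \<and> (\<exists>x\<in>A. \<exists>y\<in>m A. R x y)" if "A \<in> OA" for A
    unfolding m_def by (rule someI_ex) (use total that in blast)
  have "inj_on m OA"
  proof (rule inj_onI)
    fix A A' assume "A \<in> OA" "A' \<in> OA" "m A = m A'"
    then show "A = A'" using m[of A] m[of A'] match[of A A' "m A" "m A'"] by blast
  qed
  moreover have "NA A = NB (m A)" if "A \<in> OA" for A
    using m[OF that] val[OF that] by blast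
  ultimately have "sum NA OA = sum NB (m ` OA)"
    using sum.reindex[of m OA NB] by simp
  moreover have "m ` OA \<subseteq> OB" using m by blast
  moreover have "OB \<subseteq> m ` OA" if onto: "\<forall>B\<in>OB. \<exists>y\<in>B. \<exists>A\<in>OA. \<exists>x\<in>A. R x y"
  proof
    fix B assume B: "B \<in> OB"
    then obtain y A x where yAx: "y \<in> B" "A \<in> OA" "x \<in> A" "R x y" using onto by blast
    then have "m A = B" using m[of A] match[of A A B "m A" x] B by blast
    then show "B \<in> m ` OA" using yAx by blast
  qed
  ultimately show ?thesis by blast
qed

lemma (in group_action) act_inv_cancel:
  "x \<in> E \<Longrightarrow> g \<in> carrier G \<Longrightarrow> \<phi> (inv g) (\<phi> g x) = x"
  using composition_rule[of x "inv g" g] id_eq_one by (metis group_hom group_hom.axioms(1) group.l_inv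
    group.inv_closed restrict_apply')

lemma (in group_action) conj_mem_stabilizer:
  assumes x: "x \<in> E" and g: "g \<in> carrier G" and \<eta>: "\<eta> \<in> stabilizer G \<phi> x"
  shows "g \<otimes> \<eta> \<otimes> inv g \<in> stabilizer G \<phi> (\<phi> g x)"
proof -
  interpret group G using group_hom group_hom.axioms(1) by blast
  have \<eta>': "\<eta> \<in> carrier G" "\<phi> \<eta> x = x" using \<eta> by (auto simp: stabilizer_def)
  have "\<phi> (g \<otimes> \<eta> \<otimes> inv g) (\<phi> g x) = \<phi> (g \<otimes> \<eta>) (\<phi> (inv g) (\<phi> g x))"
    using x g \<eta>' element_image[OF g x] by (simp add: composition_rule)
  also have "\<dots> = \<phi> g x"
    using x g \<eta>' by (simp add: act_inv_cancel composition_rule)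
  finally show ?thesis using g \<eta>' by (simp add: stabilizer_def)
qed

lemma (in group_action) sum_stabilizer_image:
  assumes x: "x \<in> E" and g: "g \<in> carrier G"
  shows "(\<Sum>\<eta>\<in>stabilizer G \<phi> (\<phi> g x). f \<eta>) = (\<Sum>\<eta>\<in>stabilizer G \<phi> x. f (g \<otimes> \<eta> \<otimes> inv g))"
proof -
  interpret group G using group_hom group_hom.axioms(1) by blast
  have y: "\<phi> g x \<in> E" using element_image[OF g x] by simp
  have conj_back: "inv g \<otimes> \<eta> \<otimes> g \<in> stabilizer G \<phi> x" if "\<eta> \<in> stabilizer G \<phi> (\<phi> g x)" for \<eta>
    using conj_mem_stabilizer[OF y inv_closed[OF g] that] g x by (simp add: act_inv_cancel)
  have carrier: "\<eta> \<in> carrier G" if "\<eta> \<in> stabilizer G \<phi> z" for \<eta> z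
    using that by (simp add: stabilizer_def)
  have cancel: "inv g \<otimes> (g \<otimes> \<eta> \<otimes> inv g) \<otimes> g = \<eta>" "g \<otimes> (inv g \<otimes> \<eta> \<otimes> g) \<otimes> inv g = \<eta>"
    if "\<eta> \<in> carrier G" for \<eta>
    using that g by (simp_all add: m_assoc[symmetric]) (simp_all add: m_assoc)
  show ?thesis
    by (rule sum.reindex_bij_witness[symmetric, where j = "\<lambda>\<eta>. g \<otimes> \<eta> \<otimes> inv g" and i = "\<lambda>\<eta>. inv g \<otimes> \<eta> \<otimes> g"])
      (use carrier cancel conj_back conj_mem_stabilizer[OF x g] in auto)
qed

lemma sum_of_nat_le_pairs:
  fixes x y :: "'i \<Rightarrow> 'a::semiring_1"
  assumes "finite I" and "\<And>i. i \<in> I \<Longrightarrow> \<exists>a b::nat. x i = of_nat a \<and> y i = of_nat b \<and> a \<le> b"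
  shows "\<exists>a b::nat. sum x I = of_nat a \<and> sum y I = of_nat b \<and> a \<le> b"
  using assms
proof (induction I rule: finite_induct)
  case empty
  show ?case by (rule exI[of _ 0], rule exI[of _ 0]) simp
next
  case (insert i I)
  obtain a b where ab: "x i = of_nat a" "y i = of_nat b" "a \<le> b"
    using insert.prems[of i] by auto
  have "\<exists>a b::nat. sum x I = of_nat a \<and> sum y I = of_nat b \<and> a \<le> b"
    by (rule insert.IH) (use insert.prems in simp)
  then obtain a' b' where ab': "sum x I = of_nat a'" "sum y I = of_nat b'" "a' \<le> b'"
    by (elim exE conjE)
  show ?case
    using insert.hyps ab ab' by (intro exI[of _ "a + a'"] exI[of _ "b + b'"]) simp
qed

lemma inner_G_sum:
  assumes P: "\<forall>\<sigma>\<in>Aut C d. P d \<sigma> = (\<Sum>i<n. \<alpha> i * R i d \<sigma>)"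
    and Q: "\<forall>\<sigma>\<in>Aut C d. Q d \<sigma> = (\<Sum>j<m. \<beta> j * S j d \<sigma>)"
  shows "inner_G C P Q d = (\<Sum>i<n. \<Sum>j<m. \<alpha> i * cnj (\<beta> j) * inner_G C (R i) (S j) d)"
proof -
  let ?c = "1 / of_nat (card (Aut C d)) :: complex"
  let ?t = "\<lambda>i j \<sigma>. \<alpha> i * cnj (\<beta> j) * (R i d \<sigma> * cnj (S j d \<sigma>))"
  have "inner_G C P Q d = ?c * (\<Sum>\<sigma>\<in>Aut C d. \<Sum>i<n. \<Sum>j<m. ?t i j \<sigma>)"
    unfolding inner_G_def
  proof (rule arg_cong[where f = "\<lambda>x. ?c * x"], rule sum.cong[OF refl])
    fix \<sigma> assume "\<sigma> \<in> Aut C d"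
    then have "P d \<sigma> * cnj (Q d \<sigma>) = (\<Sum>i<n. \<alpha> i * R i d \<sigma>) * (\<Sum>j<m. cnj (\<beta> j) * cnj (S j d \<sigma>))"
      using P Q by (simp add: cnj_sum)
    also have "\<dots> = (\<Sum>i<n. \<Sum>j<m. ?t i j \<sigma>)"
      by (simp add: sum_product mult_ac)
    finally show "P d \<sigma> * cnj (Q d \<sigma>) = (\<Sum>i<n. \<Sum>j<m. ?t i j \<sigma>)" .
  qed
  also have "\<dots> = ?c * (\<Sum>i<n. \<Sum>j<m. \<Sum>\<sigma>\<in>Aut C d. ?t i j \<sigma>)"
    by (subst sum.swap, rule arg_cong[where f = "\<lambda>x. ?c * x"], rule sum.cong[OF refl], rule sum.swap)
  also have "\<dots> = (\<Sum>i<n. \<Sum>j<m. \<alpha> i * cnj (\<beta> j) * inner_G C (R i) (S j) d)"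
    unfolding inner_G_def
    by (simp add: sum_distrib_left sum_distrib_right[symmetric] mult.assoc mult.left_commute)
  finally show ?thesis .
qed

section \<open>Categories of FI type and pullbacks\<close>

locale FI_category =
  fixes C :: "('o, 'm) cat"
  assumes FI: "FI_type C"
begin

abbreviation "Ob \<equiv> cOb C"
abbreviation "Hom \<equiv> cHom C"
abbreviation "cmp \<equiv> ccomp C"
abbreviation "idm \<equiv> cid C"

lemma category: "is_category C"
  using FI by (simp add: FI_type_def)

lemma id_closed [simp]: "a \<in> Ob \<Longrightarrow> idm a \<in> Hom a a"
  using category by (simp add: is_category_def)

lemma comp_closed:
  "a \<in> Ob \<Longrightarrow> b \<in> Ob \<Longrightarrow> c \<in> Ob \<Longrightarrow> f \<in> Hom a b \<Longrightarrow> g \<in> Hom b c \<Longrightarrow> cmp g f \<in> Hom a c"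
  using category unfolding is_category_def by blast

lemma comp_id_left [simp]: "a \<in> Ob \<Longrightarrow> b \<in> Ob \<Longrightarrow> f \<in> Hom a b \<Longrightarrow> cmp (idm b) f = f"
  using category unfolding is_category_def by blast

lemma comp_id_right [simp]: "a \<in> Ob \<Longrightarrow> b \<in> Ob \<Longrightarrow> f \<in> Hom a b \<Longrightarrow> cmp f (idm a) = f"
  using category unfolding is_category_def by blast

lemma comp_assoc:
  "a \<in> Ob \<Longrightarrow> b \<in> Ob \<Longrightarrow> c \<in> Ob \<Longrightarrow> d \<in> Ob \<Longrightarrow> f \<in> Hom a b \<Longrightarrow> g \<in> Hom b c \<Longrightarrow> h \<in> Hom c d \<Longrightarrow>
    cmp h (cmp g f) = cmp (cmp h g) f"
  using category unfolding is_category_def by blast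

lemma FI_axioms:
  "c \<in> Ob \<Longrightarrow> d \<in> Ob \<Longrightarrow> finite (Hom c d)"
  "c \<in> Ob \<Longrightarrow> d \<in> Ob \<Longrightarrow> f \<in> Hom c d \<Longrightarrow> is_mono C c d f"
  "d \<in> Ob \<Longrightarrow> f \<in> Hom d d \<Longrightarrow> is_iso C d d f"
  "c \<in> Ob \<Longrightarrow> d \<in> Ob \<Longrightarrow> f \<in> Hom c d \<Longrightarrow> g \<in> Hom c d \<Longrightarrow> \<exists>\<sigma>\<in>Aut C d. cmp \<sigma> f = g"
  "c1 \<in> Ob \<Longrightarrow> c2 \<in> Ob \<Longrightarrow> d \<in> Ob \<Longrightarrow> g1 \<in> Hom c1 d \<Longrightarrow> g2 \<in> Hom c2 d \<Longrightarrow>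
    \<exists>p\<in>Ob. \<exists>f1 f2. is_pullback_square C p c1 c2 d f1 f2 g1 g2"
  "p \<in> Ob \<Longrightarrow> c1 \<in> Ob \<Longrightarrow> c2 \<in> Ob \<Longrightarrow> f1 \<in> Hom p c1 \<Longrightarrow> f2 \<in> Hom p c2 \<Longrightarrow>
    \<exists>d g1 g2. is_weak_pushout C p c1 c2 f1 f2 d g1 g2"
  using FI unfolding FI_type_def by simp_all

lemma finite_Hom: "a \<in> Ob \<Longrightarrow> b \<in> Ob \<Longrightarrow> finite (Hom a b)"
  by (rule FI_axioms(1))

lemma mono_cancel:
  "a \<in> Ob \<Longrightarrow> b \<in> Ob \<Longrightarrow> e \<in> Ob \<Longrightarrow> f \<in> Hom a b \<Longrightarrow> g \<in> Hom e a \<Longrightarrow> h \<in> Hom e a \<Longrightarrow>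
    cmp f g = cmp f h \<Longrightarrow> g = h"
  using FI_axioms(2) unfolding is_mono_def by blast

lemma Aut_eq_Hom: "d \<in> Ob \<Longrightarrow> Aut C d = Hom d d"
  using FI_axioms(3) unfolding Aut_def is_iso_def by blast

lemma endo_invertible: "d \<in> Ob \<Longrightarrow> s \<in> Hom d d \<Longrightarrow> \<exists>t\<in>Hom d d. cmp t s = idm d"
  using FI_axioms(3) unfolding is_iso_def by blast

lemma Aut_transitive:
  "c \<in> Ob \<Longrightarrow> d \<in> Ob \<Longrightarrow> f \<in> Hom c d \<Longrightarrow> g \<in> Hom c d \<Longrightarrow> \<exists>s\<in>Hom d d. cmp s f = g"
  using FI_axioms(4) Aut_eq_Hom by simp

lemmas pullback_exists = FI_axioms(5)
lemmas weak_pushout_exists = FI_axioms(6)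

lemma comp_aut_left_closed [simp]:
  "a \<in> Ob \<Longrightarrow> d \<in> Ob \<Longrightarrow> s \<in> Hom d d \<Longrightarrow> f \<in> Hom a d \<Longrightarrow> cmp s f \<in> Hom a d"
  by (rule comp_closed[of a d d]) auto

lemma comp_aut_right_closed [simp]:
  "a \<in> Ob \<Longrightarrow> d \<in> Ob \<Longrightarrow> f \<in> Hom a d \<Longrightarrow> \<alpha> \<in> Hom a a \<Longrightarrow> cmp f \<alpha> \<in> Hom a d"
  by (rule comp_closed[of a a d]) auto

definition Aut_group :: "'o \<Rightarrow> 'm monoid" where
  "Aut_group d = \<lparr>carrier = Hom d d, mult = cmp, one = idm d\<rparr>"

lemma carrier_Aut_group [simp]: "carrier (Aut_group d) = Hom d d"
  and mult_Aut_group [simp]: "x \<otimes>\<^bsub>Aut_group d\<^esub> y = cmp x y"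
  and one_Aut_group [simp]: "\<one>\<^bsub>Aut_group d\<^esub> = idm d"
  by (simp_all add: Aut_group_def)

lemma group_Aut_group: "d \<in> Ob \<Longrightarrow> group (Aut_group d)"
proof (rule groupI)
  assume d: "d \<in> Ob"
  show "x \<otimes>\<^bsub>Aut_group d\<^esub> y \<otimes>\<^bsub>Aut_group d\<^esub> z = x \<otimes>\<^bsub>Aut_group d\<^esub> (y \<otimes>\<^bsub>Aut_group d\<^esub> z)"
    if "x \<in> carrier (Aut_group d)" "y \<in> carrier (Aut_group d)" "z \<in> carrier (Aut_group d)" for x y z
    using that d comp_assoc[of d d d d z y x] by simp
qed (use endo_invertible in auto)

definition aut_inv :: "'o \<Rightarrow> 'm \<Rightarrow> 'm" where
  "aut_inv d s = inv\<^bsub>Aut_group d\<^esub> s"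

lemma aut_inv_closed [simp]: "d \<in> Ob \<Longrightarrow> s \<in> Hom d d \<Longrightarrow> aut_inv d s \<in> Hom d d"
  and aut_inv_left [simp]: "d \<in> Ob \<Longrightarrow> s \<in> Hom d d \<Longrightarrow> cmp (aut_inv d s) s = idm d"
  and aut_inv_right [simp]: "d \<in> Ob \<Longrightarrow> s \<in> Hom d d \<Longrightarrow> cmp s (aut_inv d s) = idm d"
  and aut_inv_id [simp]: "d \<in> Ob \<Longrightarrow> aut_inv d (idm d) = idm d"
  and aut_inv_inv [simp]: "d \<in> Ob \<Longrightarrow> s \<in> Hom d d \<Longrightarrow> aut_inv d (aut_inv d s) = s"
  using group.inv_closed[OF group_Aut_group, of d s] group.l_inv[OF group_Aut_group, of d s]
    group.r_inv[OF group_Aut_group, of d s] monoid.inv_one[OF group.is_monoid[OF group_Aut_group], of d]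
    group.inv_inv[OF group_Aut_group, of d s]
  by (simp_all add: aut_inv_def)

lemma aut_inv_cancel [simp]:
  assumes "a \<in> Ob" "d \<in> Ob" "s \<in> Hom d d" "x \<in> Hom a d"
  shows "cmp s (cmp (aut_inv d s) x) = x" and "cmp (aut_inv d s) (cmp s x) = x"
  using assms comp_assoc[of a d d d x "aut_inv d s" s] comp_assoc[of a d d d x s "aut_inv d s"] by simp_all

lemma aut_inv_comp:
  "d \<in> Ob \<Longrightarrow> x \<in> Hom d d \<Longrightarrow> y \<in> Hom d d \<Longrightarrow> aut_inv d (cmp x y) = cmp (aut_inv d y) (aut_inv d x)"
  using group.inv_mult_group[OF group_Aut_group, of d x y] by (simp add: aut_inv_def)


lemma pullback_comp_mono_iff:
  assumes ob: "p \<in> Ob" "a \<in> Ob" "b \<in> Ob" "w \<in> Ob" "d \<in> Ob"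
    and u: "u \<in> Hom w d" and g: "g1 \<in> Hom a w" "g2 \<in> Hom b w"
  shows "is_pullback_square C p a b w f1 f2 g1 g2 \<longleftrightarrow> is_pullback_square C p a b d f1 f2 (cmp u g1) (cmp u g2)"
proof -
  have ug: "cmp u g1 \<in> Hom a d" "cmp u g2 \<in> Hom b d"
    using comp_closed[of a w d g1 u] comp_closed[of b w d g2 u] ob u g by auto
  have eq: "cmp (cmp u g1) h1 = cmp (cmp u g2) h2 \<longleftrightarrow> cmp g1 h1 = cmp g2 h2"
    if z: "z \<in> Ob" "h1 \<in> Hom z a" "h2 \<in> Hom z b" for z h1 h2
  proof -
    have "cmp (cmp u g1) h1 = cmp u (cmp g1 h1)" using comp_assoc[of z a w d h1 g1 u] ob z u g by simp
    moreover have "cmp (cmp u g2) h2 = cmp u (cmp g2 h2)" using comp_assoc[of z b w d h2 g2 u] ob z u g by simp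
    moreover have "cmp u (cmp g1 h1) = cmp u (cmp g2 h2) \<longleftrightarrow> cmp g1 h1 = cmp g2 h2"
      using mono_cancel[of w d z u "cmp g1 h1" "cmp g2 h2"] comp_closed[of z a w h1 g1]
        comp_closed[of z b w h2 g2] ob z u g by auto
    ultimately show ?thesis by simp
  qed
  show ?thesis
  proof
    assume A: "is_pullback_square C p a b w f1 f2 g1 g2"
    then have f: "f1 \<in> Hom p a" "f2 \<in> Hom p b" by (auto simp: is_pullback_square_def)
    show "is_pullback_square C p a b d f1 f2 (cmp u g1) (cmp u g2)"
      using A eq[OF ob(1) f] ug eq unfolding is_pullback_square_def by auto
  next
    assume A: "is_pullback_square C p a b d f1 f2 (cmp u g1) (cmp u g2)"
    then have f: "f1 \<in> Hom p a" "f2 \<in> Hom p b" by (auto simp: is_pullback_square_def)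
    show "is_pullback_square C p a b w f1 f2 g1 g2"
      using A eq[OF ob(1) f] g eq unfolding is_pullback_square_def by auto
  qed
qed

lemma aut_inv_comp_eq_iff:
  assumes ob: "z \<in> Ob" "p \<in> Ob" "a \<in> Ob" and al: "\<alpha> \<in> Hom a a" and f1: "f1 \<in> Hom p a"
    and h: "h \<in> Hom z p" and h1: "h1 \<in> Hom z a"
  shows "cmp (cmp (aut_inv a \<alpha>) f1) h = h1 \<longleftrightarrow> cmp f1 h = cmp \<alpha> h1"
proof -
  have ia: "aut_inv a \<alpha> \<in> Hom a a" using ob al by simp
  have fh: "cmp f1 h \<in> Hom z a" using comp_closed[of z p a h f1] ob f1 h by auto
  have e1: "cmp (cmp (aut_inv a \<alpha>) f1) h = cmp (aut_inv a \<alpha>) (cmp f1 h)" using comp_assoc[of z p a a h f1 "aut_inv a \<alpha>"] ob ia f1 h by simp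
  show ?thesis
  proof
    assume "cmp (cmp (aut_inv a \<alpha>) f1) h = h1"
    then have "cmp (aut_inv a \<alpha>) (cmp f1 h) = h1" using e1 by simp
    then have "cmp \<alpha> (cmp (aut_inv a \<alpha>) (cmp f1 h)) = cmp \<alpha> h1" by simp
    moreover have "cmp \<alpha> (cmp (aut_inv a \<alpha>) (cmp f1 h)) = cmp f1 h"
      using comp_assoc[of z a a a "cmp f1 h" "aut_inv a \<alpha>" \<alpha>] ob ia al fh by simp
    ultimately show "cmp f1 h = cmp \<alpha> h1" by simp
  next
    assume "cmp f1 h = cmp \<alpha> h1"
    then have "cmp (cmp (aut_inv a \<alpha>) f1) h = cmp (aut_inv a \<alpha>) (cmp \<alpha> h1)" using e1 by simp
    also have "\<dots> = h1" using comp_assoc[of z a a a h1 \<alpha> "aut_inv a \<alpha>"] ob ia al h1 by simp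
    finally show "cmp (cmp (aut_inv a \<alpha>) f1) h = h1" .
  qed
qed

lemma pullback_twist:
  assumes ob: "p \<in> Ob" "a \<in> Ob" "b \<in> Ob" "d \<in> Ob"
    and P: "is_pullback_square C p a b d f1 f2 f g"
    and al: "\<alpha> \<in> Hom a a" and be: "\<beta> \<in> Hom b b"
  shows "is_pullback_square C p a b d (cmp (aut_inv a \<alpha>) f1) (cmp (aut_inv b \<beta>) f2) (cmp f \<alpha>) (cmp g \<beta>)"
proof -
  from P have f: "f1 \<in> Hom p a" "f2 \<in> Hom p b" "f \<in> Hom a d" "g \<in> Hom b d" and cm: "cmp f f1 = cmp g f2"
    and U: "\<forall>z\<in>Ob. \<forall>h1\<in>Hom z a. \<forall>h2\<in>Hom z b. cmp f h1 = cmp g h2 \<longrightarrow>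
        (\<exists>!h. h \<in> Hom z p \<and> cmp f1 h = h1 \<and> cmp f2 h = h2)"
    by (auto simp: is_pullback_square_def)
  have ia: "aut_inv a \<alpha> \<in> Hom a a" "aut_inv b \<beta> \<in> Hom b b" using ob al be by auto
  have h1: "cmp (aut_inv a \<alpha>) f1 \<in> Hom p a" "cmp (aut_inv b \<beta>) f2 \<in> Hom p b" "cmp f \<alpha> \<in> Hom a d" "cmp g \<beta> \<in> Hom b d"
    using ob f ia al be by auto
  have c1: "cmp (cmp f \<alpha>) (cmp (aut_inv a \<alpha>) f1) = cmp f f1"
    using comp_assoc[of p a a d "cmp (aut_inv a \<alpha>) f1" \<alpha> f] aut_inv_cancel(1)[OF ob(1,2) al f(1)] ob h1 al f
    by simp
  have c2: "cmp (cmp g \<beta>) (cmp (aut_inv b \<beta>) f2) = cmp g f2"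
    using comp_assoc[of p b b d "cmp (aut_inv b \<beta>) f2" \<beta> g] aut_inv_cancel(1)[OF ob(1,3) be f(2)] ob h1 be f
    by simp
  have univ: "\<exists>!h. h \<in> Hom z p \<and> cmp (cmp (aut_inv a \<alpha>) f1) h = k1 \<and> cmp (cmp (aut_inv b \<beta>) f2) h = k2"
    if z: "z \<in> Ob" "k1 \<in> Hom z a" "k2 \<in> Hom z b" and e: "cmp (cmp f \<alpha>) k1 = cmp (cmp g \<beta>) k2" for z k1 k2
  proof -
    have ak: "cmp \<alpha> k1 \<in> Hom z a" "cmp \<beta> k2 \<in> Hom z b" using z ob al be by auto
    have "cmp f (cmp \<alpha> k1) = cmp g (cmp \<beta> k2)"
      using e comp_assoc[of z a a d k1 \<alpha> f] comp_assoc[of z b b d k2 \<beta> g] z ob al be f by simp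
    then have "\<exists>!h. h \<in> Hom z p \<and> cmp f1 h = cmp \<alpha> k1 \<and> cmp f2 h = cmp \<beta> k2" using U z ak by blast
    moreover have "h \<in> Hom z p \<Longrightarrow> (cmp (cmp (aut_inv a \<alpha>) f1) h = k1 \<longleftrightarrow> cmp f1 h = cmp \<alpha> k1)" for h
      using aut_inv_comp_eq_iff[OF z(1) ob(1) ob(2) al f(1) _ z(2)] by simp
    moreover have "h \<in> Hom z p \<Longrightarrow> (cmp (cmp (aut_inv b \<beta>) f2) h = k2 \<longleftrightarrow> cmp f2 h = cmp \<beta> k2)" for h
      using aut_inv_comp_eq_iff[OF z(1) ob(1) ob(3) be f(2) _ z(3)] by simp
    ultimately show ?thesis by metis
  qed
  show ?thesis unfolding is_pullback_square_def using h1 c1 c2 cm univ by auto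
qed

lemma pullbacks_same_span:
  assumes ob: "p \<in> Ob" "a \<in> Ob" "b \<in> Ob" "d \<in> Ob"
    and P: "is_pullback_square C p a b d f1 f2 f g"
    and P': "is_pullback_square C p a b d f1 f2 f' g'"
  shows "\<exists>s\<in>Hom d d. cmp s f = f' \<and> cmp s g = g'"
proof -
  from P have f: "f1 \<in> Hom p a" "f2 \<in> Hom p b" by (auto simp: is_pullback_square_def)
  obtain w g1 g2 where W: "is_weak_pushout C p a b f1 f2 w g1 g2" using weak_pushout_exists[OF ob(1-3) f] by blast
  then have w: "w \<in> Ob" and g: "g1 \<in> Hom a w" "g2 \<in> Hom b w"
    and U: "\<forall>z\<in>Ob. \<forall>h1 h2. is_pullback_square C p a b z f1 f2 h1 h2 \<longrightarrow>
        (\<exists>!h. h \<in> Hom w z \<and> cmp h g1 = h1 \<and> cmp h g2 = h2)"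
    by (auto simp: is_weak_pushout_def is_pullback_square_def)
  obtain u where u: "u \<in> Hom w d" "cmp u g1 = f" "cmp u g2 = g" using U ob P by blast
  obtain u' where u': "u' \<in> Hom w d" "cmp u' g1 = f'" "cmp u' g2 = g'" using U ob P' by blast
  obtain s where s: "s \<in> Hom d d" "cmp s u = u'" using Aut_transitive[OF w ob(4) u(1) u'(1)] by blast
  have "cmp s f = f'" using comp_assoc[of a w d d g1 u s] ob w g u s u' by simp
  moreover have "cmp s g = g'" using comp_assoc[of b w d d g2 u s] ob w g u s u' by simp
  ultimately show ?thesis using s by blast
qed

lemma pullback_transfer:
  assumes ob: "p \<in> Ob" "q \<in> Ob" "a \<in> Ob" "b \<in> Ob" "d \<in> Ob" "d' \<in> Ob"
    and P1: "is_pullback_square C p a b d f1 f2 f g"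
    and P2: "is_pullback_square C q a b d k1 k2 f g"
    and P3: "is_pullback_square C q a b d' k1 k2 f' g'"
  shows "is_pullback_square C p a b d' f1 f2 f' g'"
proof -
  from P2 have k: "k1 \<in> Hom q a" "k2 \<in> Hom q b" by (auto simp: is_pullback_square_def)
  obtain w g1 g2 where W: "is_weak_pushout C q a b k1 k2 w g1 g2" using weak_pushout_exists[OF ob(2-4) k] by blast
  then have w: "w \<in> Ob" and g: "g1 \<in> Hom a w" "g2 \<in> Hom b w"
    and U: "\<forall>z\<in>Ob. \<forall>h1 h2. is_pullback_square C q a b z k1 k2 h1 h2 \<longrightarrow>
        (\<exists>!h. h \<in> Hom w z \<and> cmp h g1 = h1 \<and> cmp h g2 = h2)"
    by (auto simp: is_weak_pushout_def is_pullback_square_def)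
  obtain u where u: "u \<in> Hom w d" "cmp u g1 = f" "cmp u g2 = g" using U ob P2 by blast
  obtain v where v: "v \<in> Hom w d'" "cmp v g1 = f'" "cmp v g2 = g'" using U ob P3 by blast
  have "is_pullback_square C p a b w f1 f2 g1 g2"
    using pullback_comp_mono_iff[OF ob(1,3,4) w ob(5) u(1) g] P1 u by simp
  then show ?thesis
    using pullback_comp_mono_iff[OF ob(1,3,4) w ob(6) v(1) g] v by simp
qed

lemma pullback_transfer_aut:
  assumes ob: "p \<in> Ob" "q \<in> Ob" "a \<in> Ob" "b \<in> Ob" "d \<in> Ob" "d' \<in> Ob"
    and P1: "is_pullback_square C p a b d f1 f2 f g"
    and P2: "is_pullback_square C p a b d' f1 f2 fy gy"
    and P3: "is_pullback_square C q a b d k1 k2 (cmp s f) (cmp s g)"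
    and P4: "is_pullback_square C q a b d' k1 k2 fy' gy'"
    and s: "s \<in> Hom d d"
  shows "\<exists>s'\<in>Hom d' d'. cmp s' fy = fy' \<and> cmp s' gy = gy'"
proof -
  from P1 have fg: "f \<in> Hom a d" "g \<in> Hom b d" by (auto simp: is_pullback_square_def)
  have "is_pullback_square C p a b d f1 f2 (cmp s f) (cmp s g)"
    using pullback_comp_mono_iff[OF ob(1,3,4) ob(5) ob(5) s fg] P1 by simp
  then have "is_pullback_square C p a b d' f1 f2 fy' gy'"
    using pullback_transfer[OF ob(1,2,3,4,5,6) _ P3 P4] by blast
  then show ?thesis using pullbacks_same_span[OF ob(1,3,4,6) P2] by blast
qed

lemma pullback_cancel_monos:
  assumes ob: "p \<in> Ob" "a \<in> Ob" "b \<in> Ob" "c1 \<in> Ob" "c2 \<in> Ob" "w \<in> Ob"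
    and k: "k1 \<in> Hom a c1" "k2 \<in> Hom b c2" and f: "f1 \<in> Hom p a" "f2 \<in> Hom p b"
    and P: "is_pullback_square C p c1 c2 w (cmp k1 f1) (cmp k2 f2) g1 g2"
  shows "is_pullback_square C p a b w f1 f2 (cmp g1 k1) (cmp g2 k2)"
proof -
  from P have g: "g1 \<in> Hom c1 w" "g2 \<in> Hom c2 w" and cm: "cmp g1 (cmp k1 f1) = cmp g2 (cmp k2 f2)"
    and U: "\<forall>z\<in>Ob. \<forall>h1\<in>Hom z c1. \<forall>h2\<in>Hom z c2. cmp g1 h1 = cmp g2 h2 \<longrightarrow>
        (\<exists>!h. h \<in> Hom z p \<and> cmp (cmp k1 f1) h = h1 \<and> cmp (cmp k2 f2) h = h2)"
    by (auto simp: is_pullback_square_def)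
  have gk: "cmp g1 k1 \<in> Hom a w" "cmp g2 k2 \<in> Hom b w"
    using comp_closed[of a c1 w k1 g1] comp_closed[of b c2 w k2 g2] ob g k by auto
  have c: "cmp (cmp g1 k1) f1 = cmp (cmp g2 k2) f2"
    using cm comp_assoc[of p a c1 w f1 k1 g1] comp_assoc[of p b c2 w f2 k2 g2] ob g k f by simp
  have univ: "\<exists>!h. h \<in> Hom z p \<and> cmp f1 h = h1 \<and> cmp f2 h = h2"
    if z: "z \<in> Ob" "h1 \<in> Hom z a" "h2 \<in> Hom z b" and e: "cmp (cmp g1 k1) h1 = cmp (cmp g2 k2) h2" for z h1 h2
  proof -
    have kh: "cmp k1 h1 \<in> Hom z c1" "cmp k2 h2 \<in> Hom z c2"
      using comp_closed[of z a c1 h1 k1] comp_closed[of z b c2 h2 k2] z ob k by auto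
    have "cmp g1 (cmp k1 h1) = cmp g2 (cmp k2 h2)"
      using e comp_assoc[of z a c1 w h1 k1 g1] comp_assoc[of z b c2 w h2 k2 g2] z ob g k by simp
    then have ex: "\<exists>!h. h \<in> Hom z p \<and> cmp (cmp k1 f1) h = cmp k1 h1 \<and> cmp (cmp k2 f2) h = cmp k2 h2"
      using U z kh by blast
    have e1: "h \<in> Hom z p \<Longrightarrow> (cmp (cmp k1 f1) h = cmp k1 h1 \<longleftrightarrow> cmp f1 h = h1)" for h
      using comp_assoc[of z p a c1 h f1 k1] mono_cancel[of a c1 z k1 "cmp f1 h" h1] comp_closed[of z p a h f1]
        z ob k f by auto
    have e2: "h \<in> Hom z p \<Longrightarrow> (cmp (cmp k2 f2) h = cmp k2 h2 \<longleftrightarrow> cmp f2 h = h2)" for h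
      using comp_assoc[of z p b c2 h f2 k2] mono_cancel[of b c2 z k2 "cmp f2 h" h2] comp_closed[of z p b h f2]
        z ob k f by auto
    show ?thesis using ex e1 e2 by metis
  qed
  show ?thesis unfolding is_pullback_square_def using f gk c univ by auto
qed

lemma pullback_into_ge_sum:
  assumes ob: "a \<in> Ob" "b \<in> Ob" "c1 \<in> Ob" "c2 \<in> Ob" "d' \<in> Ob" "p \<in> Ob"
    and k: "k1 \<in> Hom a c1" "k2 \<in> Hom b c2" and f: "f1 \<in> Hom p a" "f2 \<in> Hom p b"
    and ge: "obj_ge_sum C d' c1 c2"
  shows "\<exists>y1\<in>Hom a d'. \<exists>y2\<in>Hom b d'. is_pullback_square C p a b d' f1 f2 y1 y2"
proof -
  have kf: "cmp k1 f1 \<in> Hom p c1" "cmp k2 f2 \<in> Hom p c2"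
    using comp_closed[of p a c1 f1 k1] comp_closed[of p b c2 f2 k2] ob k f by auto
  obtain w g1 g2 where W: "is_weak_pushout C p c1 c2 (cmp k1 f1) (cmp k2 f2) w g1 g2"
    using weak_pushout_exists[OF ob(6) ob(3,4) kf] by blast
  then have w: "w \<in> Ob" and P: "is_pullback_square C p c1 c2 w (cmp k1 f1) (cmp k2 f2) g1 g2"
    by (auto simp: is_weak_pushout_def)
  from P have g: "g1 \<in> Hom c1 w" "g2 \<in> Hom c2 w" by (auto simp: is_pullback_square_def)
  from ge W ob kf have "obj_le C w d'" unfolding obj_ge_sum_def by blast
  then obtain v where v: "v \<in> Hom w d'" by (auto simp: obj_le_def)
  have P2: "is_pullback_square C p a b w f1 f2 (cmp g1 k1) (cmp g2 k2)"
    using pullback_cancel_monos[OF ob(6,1,2,3,4) w k f P] .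
  have gk: "cmp g1 k1 \<in> Hom a w" "cmp g2 k2 \<in> Hom b w"
    using comp_closed[of a c1 w k1 g1] comp_closed[of b c2 w k2 g2] ob g k w by auto
  have "is_pullback_square C p a b d' f1 f2 (cmp v (cmp g1 k1)) (cmp v (cmp g2 k2))"
    using pullback_comp_mono_iff[OF ob(6,1,2) w ob(5) v gk] P2 by simp
  moreover have "cmp v (cmp g1 k1) \<in> Hom a d'" "cmp v (cmp g2 k2) \<in> Hom b d'"
    using comp_closed[OF ob(1) w ob(5) gk(1) v] comp_closed[OF ob(2) w ob(5) gk(2) v] .
  ultimately show ?thesis by blast
qed

end

section \<open>Induced class functions as sums over orbits of cospans\<close>

context FI_category
begin

definition twist :: "'o \<Rightarrow> 'm \<Rightarrow> 'm \<Rightarrow> 'm \<Rightarrow> 'm" where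
  "twist a s p f = cmp (cmp s f) (aut_inv a p)"

lemma twist_closed [simp]:
  "a \<in> Ob \<Longrightarrow> d \<in> Ob \<Longrightarrow> s \<in> Hom d d \<Longrightarrow> p \<in> Hom a a \<Longrightarrow> f \<in> Hom a d \<Longrightarrow> twist a s p f \<in> Hom a d"
  by (simp add: twist_def)

lemma twist_eq_comp_comp:
  "a \<in> Ob \<Longrightarrow> d \<in> Ob \<Longrightarrow> s \<in> Hom d d \<Longrightarrow> p \<in> Hom a a \<Longrightarrow> f \<in> Hom a d \<Longrightarrow>
    twist a s p f = cmp s (cmp f (aut_inv a p))"
  using comp_assoc[of a a d d "aut_inv a p" f s] by (simp add: twist_def)

lemma twist_id [simp]: "a \<in> Ob \<Longrightarrow> d \<in> Ob \<Longrightarrow> f \<in> Hom a d \<Longrightarrow> twist a (idm d) (idm a) f = f"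
  by (simp add: twist_def)

lemma twist_comp:
  assumes ob: "a \<in> Ob" "d \<in> Ob" and s: "s1 \<in> Hom d d" "s2 \<in> Hom d d"
    and p: "p1 \<in> Hom a a" "p2 \<in> Hom a a" and f: "f \<in> Hom a d"
  shows "twist a (cmp s1 s2) (cmp p1 p2) f = twist a s1 p1 (twist a s2 p2 f)"
proof -
  have i: "aut_inv a p1 \<in> Hom a a" "aut_inv a p2 \<in> Hom a a" using ob p by auto
  have "twist a (cmp s1 s2) (cmp p1 p2) f = cmp (cmp s1 (cmp s2 f)) (cmp (aut_inv a p2) (aut_inv a p1))"
    using ob s p f comp_assoc[of a d d d f s2 s1] by (simp add: twist_def aut_inv_comp)
  also have "\<dots> = cmp s1 (cmp (cmp (cmp s2 f) (aut_inv a p2)) (aut_inv a p1))"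
    using ob s f i comp_assoc[of a a a d "aut_inv a p1" "aut_inv a p2" "cmp s2 f"]
      comp_assoc[of a a d d "cmp (aut_inv a p2) (aut_inv a p1)" "cmp s2 f" s1] by auto
  also have "\<dots> = twist a s1 p1 (twist a s2 p2 f)"
    using ob s f i comp_assoc[of a a d d "aut_inv a p1" "cmp (cmp s2 f) (aut_inv a p2)" s1]
    by (simp add: twist_def)
  finally show ?thesis .
qed

lemma twist_fixed_iff:
  assumes ob: "a \<in> Ob" "d \<in> Ob" and s: "s \<in> Hom d d" and f: "f \<in> Hom a d" and p: "p \<in> Hom a a"
  shows "twist a s p f = f \<longleftrightarrow> cmp s f = cmp f p"
proof
  assume fixed: "twist a s p f = f"
  have "cmp s f = cmp (cmp s f) (cmp (aut_inv a p) p)" using ob s f p by simp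
  also have "\<dots> = cmp (twist a s p f) p"
    using comp_assoc[of a a a d p "aut_inv a p" "cmp s f"] ob s f p by (simp add: twist_def)
  finally show "cmp s f = cmp f p" using fixed by simp
next
  assume "cmp s f = cmp f p"
  then have "twist a s p f = cmp f (cmp p (aut_inv a p))"
    using comp_assoc[of a a a d "aut_inv a p" p f] ob f p by (simp add: twist_def)
  then show "twist a s p f = f" using ob f p by simp
qed

definition cospans :: "'o \<Rightarrow> 'o \<Rightarrow> 'o \<Rightarrow> ('m \<times> 'm) set" where
  "cospans d a b = Hom a d \<times> Hom b d"

definition cospan_group :: "'o \<Rightarrow> 'o \<Rightarrow> 'o \<Rightarrow> ('m \<times> 'm \<times> 'm) monoid" where
  "cospan_group d a b = Aut_group d \<times>\<times> (Aut_group a \<times>\<times> Aut_group b)"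

definition cospan_act :: "'o \<Rightarrow> 'o \<Rightarrow> 'm \<times> 'm \<times> 'm \<Rightarrow> 'm \<times> 'm \<Rightarrow> 'm \<times> 'm" where
  "cospan_act a b \<gamma> x = (twist a (fst \<gamma>) (fst (snd \<gamma>)) (fst x), twist b (fst \<gamma>) (snd (snd \<gamma>)) (snd x))"

definition cospan_action :: "'o \<Rightarrow> 'o \<Rightarrow> 'o \<Rightarrow> 'm \<times> 'm \<times> 'm \<Rightarrow> 'm \<times> 'm \<Rightarrow> 'm \<times> 'm" where
  "cospan_action d a b = (\<lambda>\<gamma>. \<lambda>x\<in>cospans d a b. cospan_act a b \<gamma> x)"

lemma group_cospan_group: "d \<in> Ob \<Longrightarrow> a \<in> Ob \<Longrightarrow> b \<in> Ob \<Longrightarrow> group (cospan_group d a b)"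
  unfolding cospan_group_def by (intro DirProd_group group_Aut_group)

lemma carrier_cospan_group: "carrier (cospan_group d a b) = Hom d d \<times> Hom a a \<times> Hom b b"
  and one_cospan_group: "\<one>\<^bsub>cospan_group d a b\<^esub> = (idm d, idm a, idm b)"
  and mult_cospan_group: "x \<otimes>\<^bsub>cospan_group d a b\<^esub> y =
    (cmp (fst x) (fst y), cmp (fst (snd x)) (fst (snd y)), cmp (snd (snd x)) (snd (snd y)))"
  by (simp_all add: cospan_group_def mult_DirProd')

lemma inv_cospan_group:
  assumes ob: "d \<in> Ob" "a \<in> Ob" "b \<in> Ob" and \<gamma>: "\<gamma> \<in> carrier (cospan_group d a b)"
  shows "inv\<^bsub>cospan_group d a b\<^esub> \<gamma> = (aut_inv d (fst \<gamma>), aut_inv a (fst (snd \<gamma>)), aut_inv b (snd (snd \<gamma>)))"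
proof -
  obtain s p q where "\<gamma> = (s,p,q)" "s \<in> Hom d d" "p \<in> Hom a a" "q \<in> Hom b b"
    using \<gamma> by (auto simp: carrier_cospan_group)
  then show ?thesis
    using inv_DirProd[OF group_Aut_group[OF ob(1)] DirProd_group[OF group_Aut_group[OF ob(2)] group_Aut_group[OF ob(3)]]]
      inv_DirProd[OF group_Aut_group[OF ob(2)] group_Aut_group[OF ob(3)]]
    by (simp add: cospan_group_def aut_inv_def)
qed

lemma cospan_group_action:
  assumes ob: "d \<in> Ob" "a \<in> Ob" "b \<in> Ob"
  shows "group_action (cospan_group d a b) (cospans d a b) (cospan_action d a b)"
  unfolding cospan_action_def
proof (rule group_actionI[OF group_cospan_group[OF ob]])
  show "cospan_act a b \<gamma> x \<in> cospans d a b"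
    if "\<gamma> \<in> carrier (cospan_group d a b)" "x \<in> cospans d a b" for \<gamma> x
    using that ob by (auto simp: carrier_cospan_group cospans_def cospan_act_def)
  show "cospan_act a b \<one>\<^bsub>cospan_group d a b\<^esub> x = x" if "x \<in> cospans d a b" for x
    using that ob by (auto simp: one_cospan_group cospans_def cospan_act_def)
  show "cospan_act a b (\<gamma> \<otimes>\<^bsub>cospan_group d a b\<^esub> \<eta>) x = cospan_act a b \<gamma> (cospan_act a b \<eta> x)"
    if "\<gamma> \<in> carrier (cospan_group d a b)" "\<eta> \<in> carrier (cospan_group d a b)" "x \<in> cospans d a b" for \<gamma> \<eta> x
    using that ob by (auto simp: carrier_cospan_group cospans_def cospan_act_def mult_cospan_group twist_comp)
qed


definition class_fun :: "'o \<Rightarrow> ('m \<Rightarrow> complex) \<Rightarrow> bool" where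
  "class_fun c \<phi> \<longleftrightarrow> (\<forall>\<psi>\<in>Hom c c. \<forall>\<tau>\<in>Hom c c. \<phi> (twist c \<tau> \<tau> \<psi>) = \<phi> \<psi>)"

definition induced_term :: "'o \<Rightarrow> ('m \<Rightarrow> complex) \<Rightarrow> 'm \<Rightarrow> 'm \<Rightarrow> complex" where
  "induced_term c \<phi> \<sigma> f =
    (if \<exists>\<psi>\<in>Aut C c. cmp \<sigma> f = cmp f \<psi> then \<phi> (THE \<psi>. \<psi> \<in> Aut C c \<and> cmp \<sigma> f = cmp f \<psi>) else 0)"

text \<open>Both \<open>binomX\<close> and \<open>ind_char\<close> are of this form, with \<open>\<phi>\<close> the indicator function of a
  conjugacy class and the character of a representation, respectively.\<close>
definition induced :: "'o \<Rightarrow> ('m \<Rightarrow> complex) \<Rightarrow> 'o \<Rightarrow> 'm \<Rightarrow> complex" where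
  "induced c \<phi> d \<sigma> = (1 / of_nat (card (Aut C c))) * (\<Sum>f\<in>Hom c d. induced_term c \<phi> \<sigma> f)"

lemma the_aut_eq:
  assumes ob: "a \<in> Ob" "d \<in> Ob" and f: "f \<in> Hom a d" and p: "p \<in> Hom a a" and eq: "cmp s f = cmp f p"
  shows "(THE \<psi>. \<psi> \<in> Aut C a \<and> cmp s f = cmp f \<psi>) = p"
proof (rule the_equality)
  show "p \<in> Aut C a \<and> cmp s f = cmp f p" using Aut_eq_Hom[OF ob(1)] p eq by simp
  fix \<psi> assume \<psi>: "\<psi> \<in> Aut C a \<and> cmp s f = cmp f \<psi>"
  then have "\<psi> \<in> Hom a a" using Aut_eq_Hom[OF ob(1)] by simp
  then show "\<psi> = p" using mono_cancel[OF ob(1,2,1) f _ p] \<psi> eq by simp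
qed

definition cospan_stab :: "'o \<Rightarrow> 'o \<Rightarrow> 'o \<Rightarrow> 'm \<times> 'm \<Rightarrow> ('m \<times> 'm \<times> 'm) set" where
  "cospan_stab d a b x = stabilizer (cospan_group d a b) (cospan_action d a b) x"

definition cospan_orbits :: "'o \<Rightarrow> 'o \<Rightarrow> 'o \<Rightarrow> ('m \<times> 'm) set set" where
  "cospan_orbits d a b = orbits (cospan_group d a b) (cospans d a b) (cospan_action d a b)"

definition stab_weight :: "('m \<Rightarrow> complex) \<Rightarrow> ('m \<Rightarrow> complex) \<Rightarrow> 'm \<times> 'm \<times> 'm \<Rightarrow> complex" where
  "stab_weight \<phi> \<chi> \<gamma> = \<phi> (fst (snd \<gamma>)) * cnj (\<chi> (snd (snd \<gamma>)))"

definition stab_avg :: "'o \<Rightarrow> 'o \<Rightarrow> 'o \<Rightarrow> ('m \<Rightarrow> complex) \<Rightarrow> ('m \<Rightarrow> complex) \<Rightarrow> 'm \<times> 'm \<Rightarrow> complex" where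
  "stab_avg d a b \<phi> \<chi> x = (\<Sum>\<gamma>\<in>cospan_stab d a b x. stab_weight \<phi> \<chi> \<gamma>) / of_nat (card (cospan_stab d a b x))"

definition orbit_avg :: "'o \<Rightarrow> 'o \<Rightarrow> 'o \<Rightarrow> ('m \<Rightarrow> complex) \<Rightarrow> ('m \<Rightarrow> complex) \<Rightarrow> ('m \<times> 'm) set \<Rightarrow> complex" where
  "orbit_avg d a b \<phi> \<chi> \<Omega> = stab_avg d a b \<phi> \<chi> (SOME x. x \<in> \<Omega>)"

lemma mem_cospan_stab_iff:
  assumes ob: "d \<in> Ob" "a \<in> Ob" "b \<in> Ob" and x: "x \<in> cospans d a b"
  shows "\<gamma> \<in> cospan_stab d a b x \<longleftrightarrow> \<gamma> \<in> carrier (cospan_group d a b) \<and>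
     cmp (fst \<gamma>) (fst x) = cmp (fst x) (fst (snd \<gamma>)) \<and> cmp (fst \<gamma>) (snd x) = cmp (snd x) (snd (snd \<gamma>))"
proof -
  have "cospan_action d a b \<gamma> x = x \<longleftrightarrow>
      cmp (fst \<gamma>) (fst x) = cmp (fst x) (fst (snd \<gamma>)) \<and> cmp (fst \<gamma>) (snd x) = cmp (snd x) (snd (snd \<gamma>))"
    if "\<gamma> \<in> carrier (cospan_group d a b)"
  proof -
    have "fst \<gamma> \<in> Hom d d" "fst (snd \<gamma>) \<in> Hom a a" "snd (snd \<gamma>) \<in> Hom b b" "fst x \<in> Hom a d" "snd x \<in> Hom b d"
      using that x by (auto simp: carrier_cospan_group cospans_def)
    then show ?thesis
      using x twist_fixed_iff[OF ob(2,1)] twist_fixed_iff[OF ob(3,1)]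
      by (simp add: cospan_action_def cospan_act_def prod_eq_iff)
  qed
  then show ?thesis by (auto simp: cospan_stab_def stabilizer_def)
qed

lemma finite_cospans: "d \<in> Ob \<Longrightarrow> a \<in> Ob \<Longrightarrow> b \<in> Ob \<Longrightarrow> finite (cospans d a b)"
  by (simp add: cospans_def finite_Hom)

lemma finite_cospan_group: "d \<in> Ob \<Longrightarrow> a \<in> Ob \<Longrightarrow> b \<in> Ob \<Longrightarrow> finite (carrier (cospan_group d a b))"
  by (simp add: carrier_cospan_group finite_Hom)

lemma order_cospan_group: "Coset.order (cospan_group d a b) = card (Hom d d) * card (Hom a a) * card (Hom b b)"
  by (simp add: Coset.order_def carrier_cospan_group card_cartesian_product)

text \<open>\<open>\<sigma>\<close> contributes iff \<open>\<sigma> f = f p\<close> and \<open>\<sigma> g = g q\<close> for some \<open>p\<close>, \<open>q\<close>, i.e. iff \<open>(\<sigma>, p, q)\<close>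
  stabilizes \<open>(f, g)\<close>; \<open>p\<close> and \<open>q\<close> are unique because \<open>f\<close> and \<open>g\<close> are monic.\<close>
lemma sum_induced_terms_eq_sum_stab:
  assumes ob: "d \<in> Ob" "a \<in> Ob" "b \<in> Ob" and x: "x \<in> cospans d a b"
  shows "(\<Sum>\<sigma>\<in>Hom d d. induced_term a \<phi> \<sigma> (fst x) * cnj (induced_term b \<chi> \<sigma> (snd x)))
       = (\<Sum>\<gamma>\<in>cospan_stab d a b x. stab_weight \<phi> \<chi> \<gamma>)"
proof -
  obtain f g where x_eq: "x = (f,g)" and fg: "f \<in> Hom a d" "g \<in> Hom b d" using x by (auto simp: cospans_def)
  let ?p = "\<lambda>\<sigma>. THE \<psi>. \<psi> \<in> Aut C a \<and> cmp \<sigma> f = cmp f \<psi>"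
  let ?q = "\<lambda>\<sigma>. THE \<psi>. \<psi> \<in> Aut C b \<and> cmp \<sigma> g = cmp g \<psi>"
  define S where "S = {\<sigma>\<in>Hom d d. (\<exists>\<psi>\<in>Aut C a. cmp \<sigma> f = cmp f \<psi>) \<and> (\<exists>\<psi>\<in>Aut C b. cmp \<sigma> g = cmp g \<psi>)}"
  have "(\<Sum>\<sigma>\<in>Hom d d. induced_term a \<phi> \<sigma> (fst x) * cnj (induced_term b \<chi> \<sigma> (snd x)))
      = (\<Sum>\<sigma>\<in>S. induced_term a \<phi> \<sigma> f * cnj (induced_term b \<chi> \<sigma> g))"
    unfolding x_eq fst_conv snd_conv
    by (rule sum.mono_neutral_right) (auto simp: S_def induced_term_def finite_Hom ob)
  also have "\<dots> = (\<Sum>\<gamma>\<in>cospan_stab d a b x. stab_weight \<phi> \<chi> \<gamma>)"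
  proof (rule sum.reindex_bij_witness[where i = fst and j = "\<lambda>\<sigma>. (\<sigma>, ?p \<sigma>, ?q \<sigma>)"])
    fix \<sigma> assume "\<sigma> \<in> S"
    then obtain p q where pq: "\<sigma> \<in> Hom d d" "p \<in> Hom a a" "cmp \<sigma> f = cmp f p" "q \<in> Hom b b" "cmp \<sigma> g = cmp g q"
      using Aut_eq_Hom[OF ob(2)] Aut_eq_Hom[OF ob(3)] by (auto simp: S_def)
    have the: "?p \<sigma> = p" "?q \<sigma> = q"
      using the_aut_eq[OF ob(2,1) fg(1) pq(2,3)] the_aut_eq[OF ob(3,1) fg(2) pq(4,5)] by auto
    show "fst (\<sigma>, ?p \<sigma>, ?q \<sigma>) = \<sigma>" by simp
    show "(\<sigma>, ?p \<sigma>, ?q \<sigma>) \<in> cospan_stab d a b x"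
      unfolding the using mem_cospan_stab_iff[OF ob x] pq x_eq by (simp add: carrier_cospan_group)
    show "stab_weight \<phi> \<chi> (\<sigma>, ?p \<sigma>, ?q \<sigma>) = induced_term a \<phi> \<sigma> f * cnj (induced_term b \<chi> \<sigma> g)"
      unfolding induced_term_def stab_weight_def the using pq Aut_eq_Hom[OF ob(2)] Aut_eq_Hom[OF ob(3)] by auto
  next
    fix \<gamma> assume "\<gamma> \<in> cospan_stab d a b x"
    then have \<gamma>: "fst \<gamma> \<in> Hom d d" "fst (snd \<gamma>) \<in> Hom a a" "snd (snd \<gamma>) \<in> Hom b b"
      "cmp (fst \<gamma>) f = cmp f (fst (snd \<gamma>))" "cmp (fst \<gamma>) g = cmp g (snd (snd \<gamma>))"
      using mem_cospan_stab_iff[OF ob x] x_eq by (auto simp: carrier_cospan_group)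
    then show "fst \<gamma> \<in> S" using Aut_eq_Hom[OF ob(2)] Aut_eq_Hom[OF ob(3)] by (auto simp: S_def)
    show "(fst \<gamma>, ?p (fst \<gamma>), ?q (fst \<gamma>)) = \<gamma>"
      using the_aut_eq[OF ob(2,1) fg(1) \<gamma>(2,4)] the_aut_eq[OF ob(3,1) fg(2) \<gamma>(3,5)] by simp
  qed
  finally show ?thesis .
qed

lemma inner_induced_eq_sum_stab:
  assumes ob: "d \<in> Ob" "a \<in> Ob" "b \<in> Ob"
  shows "inner_G C (induced a \<phi>) (induced b \<chi>) d
     = (\<Sum>x\<in>cospans d a b. \<Sum>\<gamma>\<in>cospan_stab d a b x. stab_weight \<phi> \<chi> \<gamma>) / of_nat (Coset.order (cospan_group d a b))"
proof -
  define na :: complex where "na = of_nat (card (Hom a a))"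
  define nb :: complex where "nb = of_nat (card (Hom b b))"
  define nd :: complex where "nd = of_nat (card (Hom d d))"
  let ?t = "\<lambda>\<sigma> x. induced_term a \<phi> \<sigma> (fst x) * cnj (induced_term b \<chi> \<sigma> (snd x))"
  have prod: "induced a \<phi> d \<sigma> * cnj (induced b \<chi> d \<sigma>) = (\<Sum>x\<in>cospans d a b. ?t \<sigma> x) / (na * nb)" for \<sigma>
  proof -
    have "induced a \<phi> d \<sigma> * cnj (induced b \<chi> d \<sigma>)
        = (\<Sum>f\<in>Hom a d. \<Sum>g\<in>Hom b d. induced_term a \<phi> \<sigma> f * cnj (induced_term b \<chi> \<sigma> g)) / (na * nb)"
      using Aut_eq_Hom[OF ob(2)] Aut_eq_Hom[OF ob(3)]
      by (simp add: induced_def na_def nb_def cnj_sum sum_product)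
    then show ?thesis by (simp add: cospans_def sum.cartesian_product case_prod_beta)
  qed
  have "inner_G C (induced a \<phi>) (induced b \<chi>) d = (\<Sum>\<sigma>\<in>Hom d d. \<Sum>x\<in>cospans d a b. ?t \<sigma> x) / (nd * na * nb)"
    using Aut_eq_Hom[OF ob(1)] by (simp add: inner_G_def prod nd_def sum_divide_distrib[symmetric] mult_ac)
  also have "\<dots> = (\<Sum>x\<in>cospans d a b. \<Sum>\<sigma>\<in>Hom d d. ?t \<sigma> x) / (nd * na * nb)"
    by (subst sum.swap) simp
  also have "\<dots> = (\<Sum>x\<in>cospans d a b. \<Sum>\<gamma>\<in>cospan_stab d a b x. stab_weight \<phi> \<chi> \<gamma>) / (nd * na * nb)"
    using sum_induced_terms_eq_sum_stab[OF ob] by simp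
  also have "nd * na * nb = of_nat (Coset.order (cospan_group d a b))"
    by (simp add: order_cospan_group nd_def na_def nb_def)
  finally show ?thesis .
qed

lemma stab_weight_conj:
  assumes ob: "d \<in> Ob" "a \<in> Ob" "b \<in> Ob"
    and \<gamma>: "\<gamma> \<in> carrier (cospan_group d a b)" and \<eta>: "\<eta> \<in> carrier (cospan_group d a b)"
    and \<phi>: "class_fun a \<phi>" and \<chi>: "class_fun b \<chi>"
  shows "stab_weight \<phi> \<chi> (\<gamma> \<otimes>\<^bsub>cospan_group d a b\<^esub> \<eta> \<otimes>\<^bsub>cospan_group d a b\<^esub> inv\<^bsub>cospan_group d a b\<^esub> \<gamma>)
       = stab_weight \<phi> \<chi> \<eta>"
proof -
  have "fst (snd \<gamma>) \<in> Hom a a" "snd (snd \<gamma>) \<in> Hom b b" "fst (snd \<eta>) \<in> Hom a a" "snd (snd \<eta>) \<in> Hom b b"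
    using \<gamma> \<eta> by (auto simp: carrier_cospan_group)
  then show ?thesis
    using \<phi> \<chi> inv_cospan_group[OF ob \<gamma>] unfolding class_fun_def
    by (simp add: mult_cospan_group stab_weight_def twist_def)
qed

lemma stab_avg_action:
  assumes ob: "d \<in> Ob" "a \<in> Ob" "b \<in> Ob" and x: "x \<in> cospans d a b"
    and \<gamma>: "\<gamma> \<in> carrier (cospan_group d a b)" and \<phi>: "class_fun a \<phi>" and \<chi>: "class_fun b \<chi>"
  shows "stab_avg d a b \<phi> \<chi> (cospan_action d a b \<gamma> x) = stab_avg d a b \<phi> \<chi> x"
proof -
  interpret group_action "cospan_group d a b" "cospans d a b" "cospan_action d a b"
    using cospan_group_action[OF ob] .
  have "(\<Sum>\<eta>\<in>cospan_stab d a b (cospan_action d a b \<gamma> x). stab_weight \<phi> \<chi> \<eta>)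
      = (\<Sum>\<eta>\<in>cospan_stab d a b x. stab_weight \<phi> \<chi>
           (\<gamma> \<otimes>\<^bsub>cospan_group d a b\<^esub> \<eta> \<otimes>\<^bsub>cospan_group d a b\<^esub> inv\<^bsub>cospan_group d a b\<^esub> \<gamma>))"
    using sum_stabilizer_image[OF x \<gamma>] by (simp add: cospan_stab_def)
  also have "\<dots> = (\<Sum>\<eta>\<in>cospan_stab d a b x. stab_weight \<phi> \<chi> \<eta>)"
    using stab_weight_conj[OF ob \<gamma> _ \<phi> \<chi>] by (intro sum.cong) (auto simp: cospan_stab_def stabilizer_def)
  finally have "(\<Sum>\<eta>\<in>cospan_stab d a b (cospan_action d a b \<gamma> x). stab_weight \<phi> \<chi> \<eta>)
      = (\<Sum>\<eta>\<in>cospan_stab d a b x. stab_weight \<phi> \<chi> \<eta>)" .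
  moreover have "card (cospan_stab d a b (cospan_action d a b \<gamma> x)) = card (cospan_stab d a b x)"
    using sum_stabilizer_image[OF x \<gamma>, of "\<lambda>_. 1::nat"] by (simp add: cospan_stab_def)
  ultimately show ?thesis by (simp add: stab_avg_def)
qed

lemma cospan_orbit_of_member:
  assumes ob: "d \<in> Ob" "a \<in> Ob" "b \<in> Ob" and \<Omega>: "\<Omega> \<in> cospan_orbits d a b" and x: "x \<in> \<Omega>"
  shows "\<Omega> = orbit (cospan_group d a b) (cospan_action d a b) x" and "x \<in> cospans d a b"
proof -
  interpret group_action "cospan_group d a b" "cospans d a b" "cospan_action d a b"
    using cospan_group_action[OF ob] .
  obtain x0 where x0: "x0 \<in> cospans d a b" "\<Omega> = orbit (cospan_group d a b) (cospan_action d a b) x0"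
    using \<Omega> by (auto simp: cospan_orbits_def orbits_def)
  then obtain \<gamma> where "\<gamma> \<in> carrier (cospan_group d a b)" "x = cospan_action d a b \<gamma> x0"
    using x unfolding orbit_def by blast
  then show x_mem: "x \<in> cospans d a b" using element_image x0(1) by blast
  then have "orbit (cospan_group d a b) (cospan_action d a b) x \<in> cospan_orbits d a b"
    unfolding cospan_orbits_def orbits_def by blast
  then show "\<Omega> = orbit (cospan_group d a b) (cospan_action d a b) x"
    using disjoint_union[of \<Omega>] \<Omega> x orbit_refl[OF x_mem] by (auto simp: cospan_orbits_def)
qed

lemma cospan_orbit_nonempty:
  assumes ob: "d \<in> Ob" "a \<in> Ob" "b \<in> Ob" and \<Omega>: "\<Omega> \<in> cospan_orbits d a b"
  obtains x where "x \<in> \<Omega>"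
proof -
  interpret group_action "cospan_group d a b" "cospans d a b" "cospan_action d a b"
    using cospan_group_action[OF ob] .
  show ?thesis using \<Omega> orbit_refl that by (auto simp: cospan_orbits_def orbits_def)
qed

lemma stab_avg_eq_orbit_avg:
  assumes ob: "d \<in> Ob" "a \<in> Ob" "b \<in> Ob" and \<phi>: "class_fun a \<phi>" and \<chi>: "class_fun b \<chi>"
    and \<Omega>: "\<Omega> \<in> cospan_orbits d a b" and x: "x \<in> \<Omega>"
  shows "stab_avg d a b \<phi> \<chi> x = orbit_avg d a b \<phi> \<chi> \<Omega>"
proof -
  have same: "stab_avg d a b \<phi> \<chi> y = stab_avg d a b \<phi> \<chi> x" if "y \<in> \<Omega>" for y
  proof -
    have "y \<in> orbit (cospan_group d a b) (cospan_action d a b) x"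
      using cospan_orbit_of_member[OF ob \<Omega> x] that by simp
    then obtain \<gamma> where "\<gamma> \<in> carrier (cospan_group d a b)" "y = cospan_action d a b \<gamma> x"
      unfolding orbit_def by blast
    then show ?thesis using stab_avg_action[OF ob _ _ \<phi> \<chi>] cospan_orbit_of_member(2)[OF ob \<Omega> x] by simp
  qed
  then show ?thesis using someI[of "\<lambda>y. y \<in> \<Omega>", OF x] by (simp add: orbit_avg_def)
qed

lemma sum_stab_weight:
  assumes ob: "d \<in> Ob" "a \<in> Ob" "b \<in> Ob" and x: "x \<in> cospans d a b"
  shows "(\<Sum>\<gamma>\<in>cospan_stab d a b x. stab_weight \<phi> \<chi> \<gamma>)
      = of_nat (card (cospan_stab d a b x)) * stab_avg d a b \<phi> \<chi> x"
proof -
  have "\<one>\<^bsub>cospan_group d a b\<^esub> \<in> cospan_stab d a b x"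
    using group_action.stabilizer_subgroup[OF cospan_group_action[OF ob] x]
    by (simp add: cospan_stab_def subgroup.one_closed)
  moreover have "finite (cospan_stab d a b x)"
    using finite_cospan_group[OF ob] by (rule finite_subset[rotated]) (auto simp: cospan_stab_def stabilizer_def)
  ultimately have "card (cospan_stab d a b x) > 0" by (auto simp: card_gt_0_iff)
  then show ?thesis by (simp add: stab_avg_def)
qed

text \<open>By orbit-stabilizer, each orbit contributes the average of \<open>stab_weight\<close> over the stabilizer
  of any of its points.\<close>
lemma inner_induced_eq_sum_orbits:
  assumes ob: "d \<in> Ob" "a \<in> Ob" "b \<in> Ob" and \<phi>: "class_fun a \<phi>" and \<chi>: "class_fun b \<chi>"
  shows "inner_G C (induced a \<phi>) (induced b \<chi>) d = (\<Sum>\<Omega>\<in>cospan_orbits d a b. orbit_avg d a b \<phi> \<chi> \<Omega>)"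
proof -
  interpret group_action "cospan_group d a b" "cospans d a b" "cospan_action d a b"
    using cospan_group_action[OF ob] .
  let ?n = "Coset.order (cospan_group d a b)"
  have fin: "finite (carrier (cospan_group d a b))" using finite_cospan_group[OF ob] .
  have orbit_sum: "(\<Sum>x\<in>\<Omega>. of_nat (card (cospan_stab d a b x)) * stab_avg d a b \<phi> \<chi> x)
      = of_nat ?n * orbit_avg d a b \<phi> \<chi> \<Omega>" if \<Omega>: "\<Omega> \<in> cospan_orbits d a b" for \<Omega>
  proof -
    have "(\<Sum>x\<in>\<Omega>. card (cospan_stab d a b x)) = ?n"
      using card_stablizer_sum[OF fin] \<Omega> by (simp add: cospan_orbits_def cospan_stab_def)
    then show ?thesis
      using stab_avg_eq_orbit_avg[OF ob \<phi> \<chi> \<Omega>]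
      by (simp add: sum_distrib_right[symmetric] flip: of_nat_sum)
  qed
  have "(\<Sum>x\<in>cospans d a b. \<Sum>\<gamma>\<in>cospan_stab d a b x. stab_weight \<phi> \<chi> \<gamma>)
      = (\<Sum>\<Omega>\<in>cospan_orbits d a b. \<Sum>x\<in>\<Omega>. of_nat (card (cospan_stab d a b x)) * stab_avg d a b \<phi> \<chi> x)"
    using sum_stab_weight[OF ob] disjoint_sum[OF finite_cospans[OF ob],
        of "\<lambda>x. of_nat (card (cospan_stab d a b x)) * stab_avg d a b \<phi> \<chi> x"]
    by (simp add: cospan_orbits_def)
  also have "\<dots> = of_nat ?n * (\<Sum>\<Omega>\<in>cospan_orbits d a b. orbit_avg d a b \<phi> \<chi> \<Omega>)"
    by (simp add: orbit_sum sum_distrib_left)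
  finally show ?thesis
    using inner_induced_eq_sum_stab[OF ob] fin monoid.order_gt_0_iff_finite[OF group.is_monoid[OF group_cospan_group[OF ob]]]
    by simp
qed

end

section \<open>Cospans with a common pullback\<close>

context FI_category
begin

definition common_pullback :: "'o \<Rightarrow> 'o \<Rightarrow> 'o \<Rightarrow> 'o \<Rightarrow> 'm \<times> 'm \<Rightarrow> 'm \<times> 'm \<Rightarrow> bool" where
  "common_pullback a b d d' x y \<longleftrightarrow> (\<exists>p\<in>Ob. \<exists>f1 f2. is_pullback_square C p a b d f1 f2 (fst x) (snd x) \<and>
      is_pullback_square C p a b d' f1 f2 (fst y) (snd y))"

lemma common_pullback_sym: "common_pullback a b d d' x y \<Longrightarrow> common_pullback a b d' d y x"
  unfolding common_pullback_def by blast

lemma common_pullback_twist: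
  assumes ob: "a \<in> Ob" "b \<in> Ob" "d \<in> Ob" "d' \<in> Ob" and R: "common_pullback a b d d' x y"
    and p: "p \<in> Hom a a" and q: "q \<in> Hom b b"
  shows "common_pullback a b d d' (cmp (fst x) p, cmp (snd x) q) (cmp (fst y) p, cmp (snd y) q)"
proof -
  obtain r f1 f2 where r: "r \<in> Ob" and P1: "is_pullback_square C r a b d f1 f2 (fst x) (snd x)"
    and P2: "is_pullback_square C r a b d' f1 f2 (fst y) (snd y)" using R by (auto simp: common_pullback_def)
  show ?thesis unfolding common_pullback_def
    using pullback_twist[OF r ob(1,2,3) P1 p q] pullback_twist[OF r ob(1,2,4) P2 p q] r by auto
qed

lemma common_pullback_aut:
  assumes ob: "a \<in> Ob" "b \<in> Ob" "d \<in> Ob" "d' \<in> Ob"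
    and R1: "common_pullback a b d d' x y" and R2: "common_pullback a b d d' (cmp s (fst x), cmp s (snd x)) y'"
    and s: "s \<in> Hom d d"
  shows "\<exists>s'\<in>Hom d' d'. cmp s' (fst y) = fst y' \<and> cmp s' (snd y) = snd y'"
proof -
  obtain r f1 f2 where r: "r \<in> Ob" and P1: "is_pullback_square C r a b d f1 f2 (fst x) (snd x)"
    and P2: "is_pullback_square C r a b d' f1 f2 (fst y) (snd y)" using R1 by (auto simp: common_pullback_def)
  obtain r' k1 k2 where r': "r' \<in> Ob" and P3: "is_pullback_square C r' a b d k1 k2 (cmp s (fst x)) (cmp s (snd x))"
    and P4: "is_pullback_square C r' a b d' k1 k2 (fst y') (snd y')" using R2 by (auto simp: common_pullback_def)
  show ?thesis using pullback_transfer_aut[OF r r' ob P1 P2 P3 P4 s] .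
qed

lemma common_pullback_orbit:
  assumes ob: "a \<in> Ob" "b \<in> Ob" "d \<in> Ob" "d' \<in> Ob"
    and x: "x \<in> cospans d a b" and y: "y \<in> cospans d' a b" and y': "y' \<in> cospans d' a b"
    and R1: "common_pullback a b d d' x y" and R2: "common_pullback a b d d' x' y'"
    and o: "x' \<in> orbit (cospan_group d a b) (cospan_action d a b) x"
  shows "y' \<in> orbit (cospan_group d' a b) (cospan_action d' a b) y"
proof -
  obtain \<gamma> where g: "\<gamma> \<in> carrier (cospan_group d a b)" "x' = cospan_action d a b \<gamma> x" using o unfolding orbit_def by blast
  obtain s p q where spq: "\<gamma> = (s,p,q)" "s \<in> Hom d d" "p \<in> Hom a a" "q \<in> Hom b b" using g by (auto simp: carrier_cospan_group)
  obtain f g where fg: "x = (f,g)" "f \<in> Hom a d" "g \<in> Hom b d" using x by (auto simp: cospans_def)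
  obtain fy gy where fgy: "y = (fy,gy)" "fy \<in> Hom a d'" "gy \<in> Hom b d'" using y by (auto simp: cospans_def)
  have ip: "aut_inv a p \<in> Hom a a" "aut_inv b q \<in> Hom b b" using spq ob by auto
  have R3: "common_pullback a b d d' (cmp f (aut_inv a p), cmp g (aut_inv b q)) (cmp fy (aut_inv a p), cmp gy (aut_inv b q))"
    using common_pullback_twist[OF ob R1 ip] fg fgy by simp
  have x': "x' = (cmp s (cmp f (aut_inv a p)), cmp s (cmp g (aut_inv b q)))"
    using g spq fg x ob by (simp add: cospan_action_def cospan_act_def twist_eq_comp_comp)
  obtain s' where s': "s' \<in> Hom d' d'" "cmp s' (cmp fy (aut_inv a p)) = fst y'" "cmp s' (cmp gy (aut_inv b q)) = snd y'"
    using common_pullback_aut[OF ob R3, of s y'] R2 x' spq by auto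
  have "cospan_action d' a b (s', p, q) y = y'"
    using s' spq fgy y ob by (simp add: cospan_action_def cospan_act_def twist_eq_comp_comp prod_eq_iff)
  moreover have "(s', p, q) \<in> carrier (cospan_group d' a b)" using s' spq by (simp add: carrier_cospan_group)
  ultimately show ?thesis unfolding orbit_def by blast
qed

lemma card_stab_fibre:
  assumes ob: "d \<in> Ob" "a \<in> Ob" "b \<in> Ob" and x: "x \<in> cospans d a b" and g0: "\<gamma>0 \<in> cospan_stab d a b x"
  shows "card {\<gamma>\<in>cospan_stab d a b x. snd \<gamma> = snd \<gamma>0} = card {\<gamma>\<in>cospan_stab d a b x. snd \<gamma> = (idm a, idm b)}"
proof -
  interpret GA: group_action "cospan_group d a b" "cospans d a b" "cospan_action d a b" using cospan_group_action[OF ob] .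
  interpret G: group "cospan_group d a b" using group_cospan_group[OF ob] .
  let ?B = "cospan_group d a b"
  have sg: "subgroup (cospan_stab d a b x) ?B" unfolding cospan_stab_def by (rule GA.stabilizer_subgroup[OF x])
  have sc: "cospan_stab d a b x \<subseteq> carrier ?B" using subgroup.subset[OF sg] .
  have g0c: "\<gamma>0 \<in> carrier ?B" using g0 sc by auto
  have ig0: "inv\<^bsub>?B\<^esub> \<gamma>0 \<in> cospan_stab d a b x" using subgroup.m_inv_closed[OF sg g0] .
  have comps: "fst (snd \<gamma>0) \<in> Hom a a" "snd (snd \<gamma>0) \<in> Hom b b" using g0c by (auto simp: carrier_cospan_group)
  have ids: "cmp (fst (snd \<gamma>0)) (idm a) = fst (snd \<gamma>0)" "cmp (snd (snd \<gamma>0)) (idm b) = snd (snd \<gamma>0)"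
    using comps ob by auto
  show ?thesis
  proof (rule bij_betw_same_card[symmetric], rule bij_betw_byWitness[where f = "\<lambda>\<eta>. \<gamma>0 \<otimes>\<^bsub>?B\<^esub> \<eta>" and f' = "\<lambda>\<eta>. inv\<^bsub>?B\<^esub> \<gamma>0 \<otimes>\<^bsub>?B\<^esub> \<eta>"])
    show "\<forall>a\<in>{\<gamma> \<in> cospan_stab d a b x. snd \<gamma> = (idm a, idm b)}. inv\<^bsub>?B\<^esub> \<gamma>0 \<otimes>\<^bsub>?B\<^esub> (\<gamma>0 \<otimes>\<^bsub>?B\<^esub> a) = a"
      using sc g0c by (auto simp: G.m_assoc[symmetric])
    show "\<forall>a'\<in>{\<gamma> \<in> cospan_stab d a b x. snd \<gamma> = snd \<gamma>0}. \<gamma>0 \<otimes>\<^bsub>?B\<^esub> (inv\<^bsub>?B\<^esub> \<gamma>0 \<otimes>\<^bsub>?B\<^esub> a') = a'"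
      using sc g0c by (auto simp: G.m_assoc[symmetric])
    show "(\<otimes>\<^bsub>?B\<^esub>) \<gamma>0 ` {\<gamma> \<in> cospan_stab d a b x. snd \<gamma> = (idm a, idm b)} \<subseteq> {\<gamma> \<in> cospan_stab d a b x. snd \<gamma> = snd \<gamma>0}"
    proof
      fix z assume z: "z \<in> (\<otimes>\<^bsub>?B\<^esub>) \<gamma>0 ` {\<gamma> \<in> cospan_stab d a b x. snd \<gamma> = (idm a, idm b)}"
      then obtain \<eta> where e: "\<eta> \<in> cospan_stab d a b x" "snd \<eta> = (idm a, idm b)" "z = \<gamma>0 \<otimes>\<^bsub>?B\<^esub> \<eta>" by auto
      have "z \<in> cospan_stab d a b x" using subgroup.m_closed[OF sg g0 e(1)] e by simp
      moreover have "snd z = snd \<gamma>0" using e ids by (cases \<gamma>0, cases \<eta>) (auto simp: mult_cospan_group)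
      ultimately show "z \<in> {\<gamma> \<in> cospan_stab d a b x. snd \<gamma> = snd \<gamma>0}" by simp
    qed
    show "(\<lambda>\<eta>. inv\<^bsub>?B\<^esub> \<gamma>0 \<otimes>\<^bsub>?B\<^esub> \<eta>) ` {\<gamma> \<in> cospan_stab d a b x. snd \<gamma> = snd \<gamma>0} \<subseteq> {\<gamma> \<in> cospan_stab d a b x. snd \<gamma> = (idm a, idm b)}"
    proof
      fix z assume z: "z \<in> (\<lambda>\<eta>. inv\<^bsub>?B\<^esub> \<gamma>0 \<otimes>\<^bsub>?B\<^esub> \<eta>) ` {\<gamma> \<in> cospan_stab d a b x. snd \<gamma> = snd \<gamma>0}"
      then obtain \<eta> where e: "\<eta> \<in> cospan_stab d a b x" "snd \<eta> = snd \<gamma>0" "z = inv\<^bsub>?B\<^esub> \<gamma>0 \<otimes>\<^bsub>?B\<^esub> \<eta>" by auto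
      have "z \<in> cospan_stab d a b x" using subgroup.m_closed[OF sg ig0 e(1)] e by simp
      moreover have "snd z = (idm a, idm b)" using e comps ob inv_cospan_group[OF ob g0c]
        by (cases \<gamma>0, cases \<eta>) (auto simp: mult_cospan_group)
      ultimately show "z \<in> {\<gamma> \<in> cospan_stab d a b x. snd \<gamma> = (idm a, idm b)}" by simp
    qed
  qed
qed

lemma stab_avg_eq_avg_proj:
  assumes ob: "d \<in> Ob" "a \<in> Ob" "b \<in> Ob" and x: "x \<in> cospans d a b"
  shows "stab_avg d a b \<phi> \<chi> x = (\<Sum>pq\<in>snd ` cospan_stab d a b x. \<phi> (fst pq) * cnj (\<chi> (snd pq))) / of_nat (card (snd ` cospan_stab d a b x))"
proof -
  have fin: "finite (cospan_stab d a b x)"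
    using finite_cospan_group[OF ob] by (rule finite_subset[rotated]) (auto simp: cospan_stab_def stabilizer_def)
  have "stab_avg d a b \<phi> \<chi> x = (\<Sum>\<gamma>\<in>cospan_stab d a b x. (\<lambda>pq. \<phi> (fst pq) * cnj (\<chi> (snd pq))) (snd \<gamma>)) / of_nat (card (cospan_stab d a b x))"
    by (simp add: stab_avg_def stab_weight_def)
  also have "\<dots> = (\<Sum>pq\<in>snd ` cospan_stab d a b x. \<phi> (fst pq) * cnj (\<chi> (snd pq))) / of_nat (card (snd ` cospan_stab d a b x))"
  proof (rule average_uniform_fibres[OF fin])
    fix y assume "y \<in> snd ` cospan_stab d a b x"
    then obtain \<gamma>0 where "\<gamma>0 \<in> cospan_stab d a b x" "y = snd \<gamma>0" by auto
    then show "card {\<gamma> \<in> cospan_stab d a b x. snd \<gamma> = y} = card {\<gamma>\<in>cospan_stab d a b x. snd \<gamma> = (idm a, idm b)}"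
      using card_stab_fibre[OF ob x] by simp
  qed
  finally show ?thesis .
qed

lemma proj_stab_subset:
  assumes ob: "a \<in> Ob" "b \<in> Ob" "d \<in> Ob" "d' \<in> Ob"
    and x: "x \<in> cospans d a b" and y: "y \<in> cospans d' a b" and R: "common_pullback a b d d' x y"
  shows "snd ` cospan_stab d a b x \<subseteq> snd ` cospan_stab d' a b y"
proof
  fix pq assume "pq \<in> snd ` cospan_stab d a b x"
  then obtain \<gamma> where g: "\<gamma> \<in> cospan_stab d a b x" "pq = snd \<gamma>" by auto
  then obtain s p q where spq: "\<gamma> = (s,p,q)" "s \<in> Hom d d" "p \<in> Hom a a" "q \<in> Hom b b"
    "cmp s (fst x) = cmp (fst x) p" "cmp s (snd x) = cmp (snd x) q"
    using mem_cospan_stab_iff[OF ob(3,1,2) x] by (auto simp: carrier_cospan_group)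
  have R3: "common_pullback a b d d' (cmp s (fst x), cmp s (snd x)) (cmp (fst y) p, cmp (snd y) q)"
    using common_pullback_twist[OF ob R spq(3,4)] spq(5,6) by simp
  obtain s' where s': "s' \<in> Hom d' d'" "cmp s' (fst y) = cmp (fst y) p" "cmp s' (snd y) = cmp (snd y) q"
    using common_pullback_aut[OF ob R R3 spq(2)] by auto
  have "(s',p,q) \<in> cospan_stab d' a b y" using mem_cospan_stab_iff[OF ob(4,1,2) y] s' spq by (simp add: carrier_cospan_group)
  then show "pq \<in> snd ` cospan_stab d' a b y" using g spq by force
qed

lemma stab_avg_common_pullback:
  assumes ob: "a \<in> Ob" "b \<in> Ob" "d \<in> Ob" "d' \<in> Ob"
    and x: "x \<in> cospans d a b" and y: "y \<in> cospans d' a b" and R: "common_pullback a b d d' x y"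
  shows "stab_avg d a b \<phi> \<chi> x = stab_avg d' a b \<phi> \<chi> y"
proof -
  have "snd ` cospan_stab d a b x = snd ` cospan_stab d' a b y"
    using proj_stab_subset[OF ob x y R] proj_stab_subset[OF ob(1,2,4,3) y x common_pullback_sym[OF R]] by blast
  then show ?thesis using stab_avg_eq_avg_proj[OF ob(3,1,2) x] stab_avg_eq_avg_proj[OF ob(4,1,2) y] by simp
qed

lemma related_elements_in_orbits:
  assumes ob: "a \<in> Ob" "b \<in> Ob" "d \<in> Ob" "d' \<in> Ob"
    and ex: "\<forall>x\<in>cospans d a b. \<exists>y\<in>cospans d' a b. R x y"
  shows "\<forall>A\<in>cospan_orbits d a b. \<exists>x\<in>A. \<exists>B\<in>cospan_orbits d' a b. \<exists>y\<in>B. R x y"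
proof
  interpret group_action "cospan_group d' a b" "cospans d' a b" "cospan_action d' a b"
    using cospan_group_action[OF ob(4,1,2)] .
  fix A assume A: "A \<in> cospan_orbits d a b"
  obtain x where x: "x \<in> A" using cospan_orbit_nonempty[OF ob(3,1,2) A] .
  then have "x \<in> cospans d a b" using cospan_orbit_of_member(2)[OF ob(3,1,2) A] by simp
  then obtain y where y: "y \<in> cospans d' a b" "R x y" using ex by blast
  let ?B = "orbit (cospan_group d' a b) (cospan_action d' a b) y"
  have "?B \<in> cospan_orbits d' a b"
    using y(1) unfolding cospan_orbits_def orbits_def by blast
  moreover have "y \<in> ?B" using orbit_refl[OF y(1)] .
  ultimately show "\<exists>x\<in>A. \<exists>B\<in>cospan_orbits d' a b. \<exists>y\<in>B. R x y"
    using x y(2) by (intro bexI)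
qed

lemma cospan_orbits_eq_iff:
  assumes ob: "d \<in> Ob" "a \<in> Ob" "b \<in> Ob"
    and \<Omega>: "\<Omega> \<in> cospan_orbits d a b" "\<Omega>' \<in> cospan_orbits d a b" and x: "x \<in> \<Omega>" "x' \<in> \<Omega>'"
  shows "\<Omega> = \<Omega>' \<longleftrightarrow> x' \<in> orbit (cospan_group d a b) (cospan_action d a b) x"
proof
  assume "\<Omega> = \<Omega>'"
  then show "x' \<in> orbit (cospan_group d a b) (cospan_action d a b) x"
    using cospan_orbit_of_member(1)[OF ob \<Omega>(1) x(1)] x(2) by simp
next
  assume "x' \<in> orbit (cospan_group d a b) (cospan_action d a b) x"
  then show "\<Omega> = \<Omega>'"
    using cospan_orbit_of_member(1)[OF ob \<Omega>(1) x(1)] cospan_orbit_of_member(1)[OF ob \<Omega>(2) x(2)]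
      cospan_orbit_of_member(1)[OF ob \<Omega>(1)] by simp
qed

lemma common_pullback_orbits_match:
  assumes ob: "a \<in> Ob" "b \<in> Ob" "d \<in> Ob" "d' \<in> Ob"
    and AB: "A \<in> cospan_orbits d a b" "A' \<in> cospan_orbits d a b" "B \<in> cospan_orbits d' a b" "B' \<in> cospan_orbits d' a b"
    and xy: "x \<in> A" "x' \<in> A'" "y \<in> B" "y' \<in> B'"
    and R: "common_pullback a b d d' x y" "common_pullback a b d d' x' y'"
  shows "A = A' \<longleftrightarrow> B = B'"
proof -
  have mem: "x \<in> cospans d a b" "x' \<in> cospans d a b" "y \<in> cospans d' a b" "y' \<in> cospans d' a b"
    using cospan_orbit_of_member(2)[OF ob(3,1,2) AB(1) xy(1)] cospan_orbit_of_member(2)[OF ob(3,1,2) AB(2) xy(2)]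
      cospan_orbit_of_member(2)[OF ob(4,1,2) AB(3) xy(3)] cospan_orbit_of_member(2)[OF ob(4,1,2) AB(4) xy(4)] .
  have "x' \<in> orbit (cospan_group d a b) (cospan_action d a b) x \<longleftrightarrow>
      y' \<in> orbit (cospan_group d' a b) (cospan_action d' a b) y"
    using common_pullback_orbit[OF ob mem(1,3,4) R]
      common_pullback_orbit[OF ob(1,2,4,3) mem(3,1,2) common_pullback_sym[OF R(1)] common_pullback_sym[OF R(2)]]
    by blast
  then show ?thesis
    using cospan_orbits_eq_iff[OF ob(3,1,2) AB(1,2) xy(1,2)] cospan_orbits_eq_iff[OF ob(4,1,2) AB(3,4) xy(3,4)]
    by simp
qed

text \<open>Cospans with a common pullback lie in matching orbits, with equal averages.\<close>
lemma sum_orbit_avg_compare: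
  assumes ob: "a \<in> Ob" "b \<in> Ob" "d \<in> Ob" "d' \<in> Ob" and \<phi>: "class_fun a \<phi>" and \<chi>: "class_fun b \<chi>"
    and ex: "\<forall>x\<in>cospans d a b. \<exists>y\<in>cospans d' a b. common_pullback a b d d' x y"
  shows "\<exists>S\<subseteq>cospan_orbits d' a b. (\<Sum>\<Omega>\<in>cospan_orbits d a b. orbit_avg d a b \<phi> \<chi> \<Omega>) = (\<Sum>\<Omega>\<in>S. orbit_avg d' a b \<phi> \<chi> \<Omega>) \<and>
     ((\<forall>y\<in>cospans d' a b. \<exists>x\<in>cospans d a b. common_pullback a b d d' x y) \<longrightarrow> S = cospan_orbits d' a b)"
proof -
  let ?R = "common_pullback a b d d'"
  obtain S where S: "S \<subseteq> cospan_orbits d' a b"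
    "(\<Sum>\<Omega>\<in>cospan_orbits d a b. orbit_avg d a b \<phi> \<chi> \<Omega>) = (\<Sum>\<Omega>\<in>S. orbit_avg d' a b \<phi> \<chi> \<Omega>)"
    "(\<forall>B\<in>cospan_orbits d' a b. \<exists>y\<in>B. \<exists>A\<in>cospan_orbits d a b. \<exists>x\<in>A. ?R x y) \<longrightarrow> S = cospan_orbits d' a b"
  proof (atomize_elim, rule sum_partition_via_relation)
    show "\<forall>A\<in>cospan_orbits d a b. \<exists>x\<in>A. \<exists>B\<in>cospan_orbits d' a b. \<exists>y\<in>B. ?R x y"
      using related_elements_in_orbits[OF ob ex] .
  next
    fix A A' B B' x x' y y'
    assume "A \<in> cospan_orbits d a b" "A' \<in> cospan_orbits d a b" "B \<in> cospan_orbits d' a b"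
      "B' \<in> cospan_orbits d' a b" "x \<in> A" "x' \<in> A'" "y \<in> B" "y' \<in> B'" "?R x y" "?R x' y'"
    then show "A = A' \<longleftrightarrow> B = B'" by (rule common_pullback_orbits_match[OF ob])
  next
    fix A B x y
    assume AB: "A \<in> cospan_orbits d a b" "B \<in> cospan_orbits d' a b" and xy: "x \<in> A" "y \<in> B" and R: "?R x y"
    have mem: "x \<in> cospans d a b" "y \<in> cospans d' a b"
      using cospan_orbit_of_member(2)[OF ob(3,1,2) AB(1) xy(1)] cospan_orbit_of_member(2)[OF ob(4,1,2) AB(2) xy(2)] .
    have "orbit_avg d a b \<phi> \<chi> A = stab_avg d a b \<phi> \<chi> x"
      using stab_avg_eq_orbit_avg[OF ob(3,1,2) \<phi> \<chi> AB(1) xy(1)] by simp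
    also have "\<dots> = stab_avg d' a b \<phi> \<chi> y"
      using stab_avg_common_pullback[OF ob mem R] .
    also have "\<dots> = orbit_avg d' a b \<phi> \<chi> B"
      using stab_avg_eq_orbit_avg[OF ob(4,1,2) \<phi> \<chi> AB(2) xy(2)] .
    finally show "orbit_avg d a b \<phi> \<chi> A = orbit_avg d' a b \<phi> \<chi> B" .
  qed
  moreover have "\<forall>B\<in>cospan_orbits d' a b. \<exists>y\<in>B. \<exists>A\<in>cospan_orbits d a b. \<exists>x\<in>A. ?R x y"
    if "\<forall>y\<in>cospans d' a b. \<exists>x\<in>cospans d a b. ?R x y"
    using related_elements_in_orbits[OF ob(1,2,4,3), of "\<lambda>y x. ?R x y"] that by simp
  ultimately show ?thesis by (intro exI[of _ S]) simp
qed


lemma common_pullback_exists_mono: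
  assumes ob: "a \<in> Ob" "b \<in> Ob" "d \<in> Ob" "d' \<in> Ob" and k: "k \<in> Hom d d'" and x: "x \<in> cospans d a b"
  shows "\<exists>y\<in>cospans d' a b. common_pullback a b d d' x y"
proof -
  have fx: "fst x \<in> Hom a d" "snd x \<in> Hom b d" using x by (auto simp: cospans_def)
  obtain p f1 f2 where p: "p \<in> Ob" and P: "is_pullback_square C p a b d f1 f2 (fst x) (snd x)"
    using pullback_exists[OF ob(1-3) fx] by blast
  have "is_pullback_square C p a b d' f1 f2 (cmp k (fst x)) (cmp k (snd x))"
    using pullback_comp_mono_iff[OF p ob(1-4) k fx] P by simp
  moreover have "(cmp k (fst x), cmp k (snd x)) \<in> cospans d' a b"
    using comp_closed[of a d d' "fst x" k] comp_closed[of b d d' "snd x" k] fx k ob by (auto simp: cospans_def)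
  ultimately show ?thesis using P p unfolding common_pullback_def by force
qed

lemma common_pullback_exists_ge_sum:
  assumes ob: "a \<in> Ob" "b \<in> Ob" "d \<in> Ob" "d' \<in> Ob" "c1 \<in> Ob" "c2 \<in> Ob"
    and le: "obj_le C a c1" "obj_le C b c2" and ge: "obj_ge_sum C d' c1 c2" and x: "x \<in> cospans d a b"
  shows "\<exists>y\<in>cospans d' a b. common_pullback a b d d' x y"
proof -
  obtain k1 k2 where k: "k1 \<in> Hom a c1" "k2 \<in> Hom b c2" using le by (auto simp: obj_le_def)
  have fx: "fst x \<in> Hom a d" "snd x \<in> Hom b d" using x by (auto simp: cospans_def)
  obtain p f1 f2 where p: "p \<in> Ob" and P: "is_pullback_square C p a b d f1 f2 (fst x) (snd x)"
    using pullback_exists[OF ob(1-3) fx] by blast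
  have f: "f1 \<in> Hom p a" "f2 \<in> Hom p b" using P by (auto simp: is_pullback_square_def)
  obtain y1 y2 where "y1 \<in> Hom a d'" "y2 \<in> Hom b d'" "is_pullback_square C p a b d' f1 f2 y1 y2"
    using pullback_into_ge_sum[OF ob(1,2,5,6,4) p k f ge] by blast
  then show ?thesis using P p unfolding common_pullback_def cospans_def by force
qed

theorem inner_induced_stable:
  assumes ob: "a \<in> Ob" "b \<in> Ob" "d \<in> Ob" "d' \<in> Ob" "c1 \<in> Ob" "c2 \<in> Ob"
    and le: "obj_le C a c1" "obj_le C b c2" and ge: "obj_ge_sum C d c1 c2" "obj_ge_sum C d' c1 c2"
    and \<phi>: "class_fun a \<phi>" and \<chi>: "class_fun b \<chi>"
  shows "inner_G C (induced a \<phi>) (induced b \<chi>) d = inner_G C (induced a \<phi>) (induced b \<chi>) d'"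
proof -
  have "\<forall>x\<in>cospans d a b. \<exists>y\<in>cospans d' a b. common_pullback a b d d' x y"
    using common_pullback_exists_ge_sum[OF ob le ge(2)] by blast
  moreover have "\<forall>y\<in>cospans d' a b. \<exists>x\<in>cospans d a b. common_pullback a b d d' x y"
    using common_pullback_exists_ge_sum[OF ob(1,2,4,3,5,6) le ge(1)] common_pullback_sym by blast
  ultimately show ?thesis
    using sum_orbit_avg_compare[OF ob(1-4) \<phi> \<chi>] inner_induced_eq_sum_orbits[OF ob(3,1,2) \<phi> \<chi>]
      inner_induced_eq_sum_orbits[OF ob(4,1,2) \<phi> \<chi>]
    by metis
qed

lemma class_fun_trace:
  assumes c: "c \<in> Ob" and \<rho>: "is_rep C c k \<rho>"
  shows "class_fun c (\<lambda>\<psi>. mtrace (\<rho> \<psi>))"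
  unfolding class_fun_def
proof (intro ballI)
  fix \<psi> \<tau> assume h: "\<psi> \<in> Hom c c" "\<tau> \<in> Hom c c"
  have rep: "\<forall>\<psi>\<in>Hom c c. \<rho> \<psi> \<in> carrier_mat k k"
     "\<forall>\<psi>\<in>Hom c c. \<forall>\<psi>'\<in>Hom c c. \<rho> (cmp \<psi> \<psi>') = \<rho> \<psi> * \<rho> \<psi>'" "\<rho> (idm c) = 1\<^sub>m k"
    using \<rho> Aut_eq_Hom[OF c] by (auto simp: is_rep_def)
  have m: "\<rho> \<tau> \<in> carrier_mat k k" "\<rho> \<psi> \<in> carrier_mat k k" "\<rho> (aut_inv c \<tau>) \<in> carrier_mat k k"
    using rep h c by auto
  have "\<rho> (twist c \<tau> \<tau> \<psi>) = \<rho> \<tau> * (\<rho> \<psi> * \<rho> (aut_inv c \<tau>))"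
    using rep h c m by (simp add: twist_def assoc_mult_mat[of _ k k _ k _ k])
  then have "mtrace (\<rho> (twist c \<tau> \<tau> \<psi>)) = mtrace ((\<rho> \<psi> * \<rho> (aut_inv c \<tau>)) * \<rho> \<tau>)"
    using mtrace_mult_comm[of "\<rho> \<tau>" k k "\<rho> \<psi> * \<rho> (aut_inv c \<tau>)"] m by simp
  also have "\<dots> = mtrace (\<rho> \<psi> * (\<rho> (aut_inv c \<tau>) * \<rho> \<tau>))"
    using m by (simp add: assoc_mult_mat[of _ k k _ k _ k])
  also have "\<rho> (aut_inv c \<tau>) * \<rho> \<tau> = 1\<^sub>m k"
    using rep(2)[rule_format, of "aut_inv c \<tau>" \<tau>] rep(3) h c by simp
  finally show "mtrace (\<rho> (twist c \<tau> \<tau> \<psi>)) = mtrace (\<rho> \<psi>)" using m by simp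
qed

text \<open>The average over a stabilizer \<open>H \<subseteq> G\<^sub>d \<times> G\<^sub>a \<times> G\<^sub>b\<close> is the inner product of the characters
  of two representations of \<open>H\<close>, pulled back from \<open>G\<^sub>a\<close> and \<open>G\<^sub>b\<close>.\<close>
lemma orbit_avg_trace_nat:
  assumes ob: "d \<in> Ob" "a \<in> Ob" "b \<in> Ob" and \<rho>: "is_rep C a k \<rho>" and \<rho>': "is_rep C b k' \<rho>'"
    and \<Omega>: "\<Omega> \<in> cospan_orbits d a b"
  shows "\<exists>n::nat. orbit_avg d a b (\<lambda>\<psi>. mtrace (\<rho> \<psi>)) (\<lambda>\<psi>. mtrace (\<rho>' \<psi>)) \<Omega> = of_nat n"
proof -
  interpret group_action "cospan_group d a b" "cospans d a b" "cospan_action d a b"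
    using cospan_group_action[OF ob] .
  define x where "x = (SOME x. x \<in> \<Omega>)"
  have "x \<in> \<Omega>" unfolding x_def using cospan_orbit_nonempty[OF ob \<Omega>] by (metis someI)
  then have x: "x \<in> cospans d a b" using cospan_orbit_of_member(2)[OF ob \<Omega>] by blast
  have sg: "subgroup (cospan_stab d a b x) (cospan_group d a b)"
    unfolding cospan_stab_def by (rule stabilizer_subgroup[OF x])
  define H where "H = (cospan_group d a b)\<lparr>carrier := cospan_stab d a b x\<rparr>"
  have H: "group H" unfolding H_def by (rule group.subgroup_imp_group[OF group_cospan_group[OF ob] sg])
  have fin: "finite (carrier H)" unfolding H_def
    using finite_subset[OF subgroup.subset[OF sg] finite_cospan_group[OF ob]] by simp
  have comps: "fst (snd \<gamma>) \<in> Hom a a" "snd (snd \<gamma>) \<in> Hom b b" if "\<gamma> \<in> carrier H" for \<gamma>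
    using subgroup.subset[OF sg] that by (auto simp: H_def carrier_cospan_group)
  have "mat_rep H k (\<lambda>\<gamma>. \<rho> (fst (snd \<gamma>)))" "mat_rep H k' (\<lambda>\<gamma>. \<rho>' (snd (snd \<gamma>)))"
    using \<rho> \<rho>' comps Aut_eq_Hom[OF ob(2)] Aut_eq_Hom[OF ob(3)]
    by (auto simp: mat_rep_def is_rep_def H_def one_cospan_group mult_cospan_group)
  from group.character_inner_nat[OF H fin this] show ?thesis
    by (simp add: orbit_avg_def stab_avg_def x_def[symmetric] H_def Coset.order_def stab_weight_def)
qed

theorem inner_induced_trace_mono:
  assumes ob: "a \<in> Ob" "b \<in> Ob" "d \<in> Ob" "d' \<in> Ob" and le: "obj_le C d d'"
    and \<rho>: "is_rep C a k \<rho>" and \<rho>': "is_rep C b k' \<rho>'"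
  defines "\<phi> \<equiv> \<lambda>\<psi>. mtrace (\<rho> \<psi>)" and "\<chi> \<equiv> \<lambda>\<psi>. mtrace (\<rho>' \<psi>)"
  shows "\<exists>m n::nat. inner_G C (induced a \<phi>) (induced b \<chi>) d = of_nat m \<and>
           inner_G C (induced a \<phi>) (induced b \<chi>) d' = of_nat n \<and> m \<le> n"
proof -
  have \<phi>: "class_fun a \<phi>" and \<chi>: "class_fun b \<chi>"
    unfolding \<phi>_def \<chi>_def using class_fun_trace[OF ob(1) \<rho>] class_fun_trace[OF ob(2) \<rho>'] .
  obtain k0 where "k0 \<in> Hom d d'" using le by (auto simp: obj_le_def)
  then obtain S where S: "S \<subseteq> cospan_orbits d' a b"
    "(\<Sum>\<Omega>\<in>cospan_orbits d a b. orbit_avg d a b \<phi> \<chi> \<Omega>) = (\<Sum>\<Omega>\<in>S. orbit_avg d' a b \<phi> \<chi> \<Omega>)"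
    using sum_orbit_avg_compare[OF ob \<phi> \<chi>] common_pullback_exists_mono[OF ob] by meson
  define N where "N \<Omega> = (SOME n::nat. orbit_avg d' a b \<phi> \<chi> \<Omega> = of_nat n)" for \<Omega>
  have N: "orbit_avg d' a b \<phi> \<chi> \<Omega> = of_nat (N \<Omega>)" if "\<Omega> \<in> cospan_orbits d' a b" for \<Omega>
    unfolding N_def \<phi>_def \<chi>_def by (rule someI_ex, rule orbit_avg_trace_nat[OF ob(4,1,2) \<rho> \<rho>' that])
  have "cospan_orbits d' a b = orbit (cospan_group d' a b) (cospan_action d' a b) ` cospans d' a b"
    unfolding cospan_orbits_def orbits_def by blast
  then have "finite (cospan_orbits d' a b)" using finite_cospans[OF ob(4,1,2)] by simp
  then have "(\<Sum>\<Omega>\<in>S. N \<Omega>) \<le> (\<Sum>\<Omega>\<in>cospan_orbits d' a b. N \<Omega>)"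
    using S(1) by (intro sum_mono2) auto
  moreover have "inner_G C (induced a \<phi>) (induced b \<chi>) d = of_nat (\<Sum>\<Omega>\<in>S. N \<Omega>)"
    using inner_induced_eq_sum_orbits[OF ob(3,1,2) \<phi> \<chi>] S N by (simp add: subset_iff)
  moreover have "inner_G C (induced a \<phi>) (induced b \<chi>) d' = of_nat (\<Sum>\<Omega>\<in>cospan_orbits d' a b. N \<Omega>)"
    using inner_induced_eq_sum_orbits[OF ob(4,1,2) \<phi> \<chi>] N by simp
  ultimately show ?thesis by blast
qed

end

section \<open>Character polynomials and characters of free modules\<close>

context FI_category
begin

lemma conj_class_twist_closed:
  assumes c: "c \<in> Ob" and \<psi>0: "\<psi>0 \<in> Hom c c" and \<psi>: "\<psi> \<in> conj_class C c \<psi>0" and \<alpha>: "\<alpha> \<in> Hom c c"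
  shows "twist c \<alpha> \<alpha> \<psi> \<in> conj_class C c \<psi>0"
proof -
  obtain \<tau> where \<tau>: "\<tau> \<in> Hom c c" "\<psi> \<in> Hom c c" "cmp \<tau> \<psi>0 = cmp \<psi> \<tau>"
    using \<psi> Aut_eq_Hom[OF c] by (auto simp: conj_class_def)
  have "cmp (cmp \<alpha> \<tau>) \<psi>0 = cmp (cmp \<alpha> \<psi>) \<tau>"
    using \<tau> \<alpha> \<psi>0 c by (simp add: comp_assoc[of c c c c, symmetric])
  also have "\<dots> = cmp (twist c \<alpha> \<alpha> \<psi>) (cmp \<alpha> \<tau>)"
    using \<tau> \<alpha> c by (simp add: twist_def comp_assoc[of c c c c, symmetric])
  finally show ?thesis
    using \<tau> \<alpha> c Aut_eq_Hom[OF c] by (auto simp: conj_class_def)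
qed

lemma class_fun_conj_class_indicator:
  assumes c: "c \<in> Ob" and \<psi>0: "\<psi>0 \<in> Hom c c"
  shows "class_fun c (\<lambda>\<psi>. if \<psi> \<in> conj_class C c \<psi>0 then 1 else 0)"
  unfolding class_fun_def
proof (intro ballI)
  fix \<psi> \<tau> assume h: "\<psi> \<in> Hom c c" "\<tau> \<in> Hom c c"
  have "twist c (aut_inv c \<tau>) (aut_inv c \<tau>) (twist c \<tau> \<tau> \<psi>) = \<psi>"
    using h c twist_comp[of c c "aut_inv c \<tau>" \<tau> "aut_inv c \<tau>" \<tau> \<psi>] by simp
  then have "twist c \<tau> \<tau> \<psi> \<in> conj_class C c \<psi>0 \<longleftrightarrow> \<psi> \<in> conj_class C c \<psi>0"
    using conj_class_twist_closed[OF c \<psi>0] h c by (metis aut_inv_closed)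
  then show "(if twist c \<tau> \<tau> \<psi> \<in> conj_class C c \<psi>0 then 1 else 0) = (if \<psi> \<in> conj_class C c \<psi>0 then 1 else (0::complex))"
    by simp
qed

definition precomp_orbit :: "'o \<Rightarrow> 'm \<Rightarrow> 'm set" where
  "precomp_orbit c f = {cmp f \<psi> | \<psi>. \<psi> \<in> Aut C c}"

lemma binom_set_eq_image: "binom_set C d c = precomp_orbit c ` Hom c d"
  by (auto simp: binom_set_def precomp_orbit_def)

lemma precomp_orbit_subset: "c \<in> Ob \<Longrightarrow> d \<in> Ob \<Longrightarrow> f \<in> Hom c d \<Longrightarrow> precomp_orbit c f \<subseteq> Hom c d"
  by (auto simp: precomp_orbit_def Aut_eq_Hom)

lemma self_mem_precomp_orbit: "c \<in> Ob \<Longrightarrow> d \<in> Ob \<Longrightarrow> f \<in> Hom c d \<Longrightarrow> f \<in> precomp_orbit c f"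
  unfolding precomp_orbit_def by (rule CollectI, rule exI[of _ "idm c"]) (simp add: Aut_eq_Hom)

lemma card_precomp_orbit:
  assumes c: "c \<in> Ob" and d: "d \<in> Ob" and f: "f \<in> Hom c d"
  shows "card (precomp_orbit c f) = card (Hom c c)"
proof -
  have "precomp_orbit c f = cmp f ` Hom c c" using Aut_eq_Hom[OF c] by (auto simp: precomp_orbit_def)
  moreover have "inj_on (cmp f) (Hom c c)" using mono_cancel[OF c d c f] by (auto intro: inj_onI)
  ultimately show ?thesis by (simp add: card_image)
qed

lemma precomp_orbit_eq:
  assumes c: "c \<in> Ob" and d: "d \<in> Ob" and f: "f \<in> Hom c d" and f': "f' \<in> precomp_orbit c f"
  shows "precomp_orbit c f' = precomp_orbit c f"
proof -
  obtain \<psi> where \<psi>: "\<psi> \<in> Hom c c" "f' = cmp f \<psi>" using f' Aut_eq_Hom[OF c] by (auto simp: precomp_orbit_def)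
  have orbit: "precomp_orbit c g = {cmp g \<psi> | \<psi>. \<psi> \<in> Hom c c}" for g
    using Aut_eq_Hom[OF c] by (simp add: precomp_orbit_def)
  show ?thesis
  proof
    show "precomp_orbit c f' \<subseteq> precomp_orbit c f"
    proof
      fix g assume "g \<in> precomp_orbit c f'"
      then obtain \<psi>' where \<psi>': "\<psi>' \<in> Hom c c" "g = cmp f' \<psi>'" by (auto simp: orbit)
      then have "g = cmp f (cmp \<psi> \<psi>')" using comp_assoc[of c c c d \<psi>' \<psi> f] \<psi> c d f by simp
      moreover have "cmp \<psi> \<psi>' \<in> Hom c c" using comp_closed[of c c c \<psi>' \<psi>] \<psi> \<psi>' c by simp
      ultimately show "g \<in> precomp_orbit c f" by (auto simp: orbit)
    qed
    show "precomp_orbit c f \<subseteq> precomp_orbit c f'"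
    proof
      fix g assume "g \<in> precomp_orbit c f"
      then obtain \<psi>' where \<psi>': "\<psi>' \<in> Hom c c" "g = cmp f \<psi>'" by (auto simp: orbit)
      then have "g = cmp f' (cmp (aut_inv c \<psi>) \<psi>')"
        using comp_assoc[of c c c d "cmp (aut_inv c \<psi>) \<psi>'" \<psi> f] aut_inv_cancel(1)[of c c \<psi> \<psi>'] \<psi> c d f by simp
      moreover have "cmp (aut_inv c \<psi>) \<psi>' \<in> Hom c c" using \<psi> \<psi>' c by simp
      ultimately show "g \<in> precomp_orbit c f'" by (auto simp: orbit)
    qed
  qed
qed

lemma precomp_orbit_fixed:
  assumes c: "c \<in> Ob" and d: "d \<in> Ob" and \<psi>0: "\<psi>0 \<in> Hom c c" and \<sigma>: "\<sigma> \<in> Hom d d"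
    and f: "f \<in> Hom c d" and fixed: "\<psi> \<in> conj_class C c \<psi>0" "cmp \<sigma> f = cmp f \<psi>"
    and g: "g \<in> precomp_orbit c f"
  shows "\<exists>\<psi>'\<in>conj_class C c \<psi>0. cmp \<sigma> g = cmp g \<psi>'"
proof -
  obtain \<tau> where \<tau>: "\<tau> \<in> Hom c c" "g = cmp f \<tau>" using g Aut_eq_Hom[OF c] by (auto simp: precomp_orbit_def)
  have \<psi>: "\<psi> \<in> Hom c c" using fixed(1) Aut_eq_Hom[OF c] by (auto simp: conj_class_def)
  have \<psi>\<tau>: "cmp \<psi> \<tau> \<in> Hom c c" using comp_closed[of c c c \<tau> \<psi>] \<psi> \<tau> c by simp
  have "cmp \<sigma> g = cmp (cmp \<sigma> f) \<tau>" using \<tau> \<sigma> f c d comp_assoc[of c c d d \<tau> f \<sigma>] by simp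
  also have "\<dots> = cmp f (cmp \<psi> \<tau>)" using fixed(2) \<tau> \<psi> f c d comp_assoc[of c c c d \<tau> \<psi> f] by simp
  also have "\<dots> = cmp f (cmp \<tau> (cmp (aut_inv c \<tau>) (cmp \<psi> \<tau>)))"
    using aut_inv_cancel(1)[OF c c \<tau>(1) \<psi>\<tau>] by simp
  also have "\<dots> = cmp g (cmp (aut_inv c \<tau>) (cmp \<psi> \<tau>))"
    using \<tau> \<psi>\<tau> f c d comp_assoc[of c c c d "cmp (aut_inv c \<tau>) (cmp \<psi> \<tau>)" \<tau> f] by simp
  also have "cmp (aut_inv c \<tau>) (cmp \<psi> \<tau>) = twist c (aut_inv c \<tau>) (aut_inv c \<tau>) \<psi>"
    using \<tau> \<psi> c twist_eq_comp_comp[of c c "aut_inv c \<tau>" "aut_inv c \<tau>" \<psi>] by simp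
  finally show ?thesis
    using conj_class_twist_closed[OF c \<psi>0 fixed(1) aut_inv_closed[OF c \<tau>(1)]] by blast
qed

lemma induced_indicator:
  assumes c: "c \<in> Ob" and d: "d \<in> Ob" and \<mu>: "\<mu> \<subseteq> Hom c c"
  shows "induced c (\<lambda>\<psi>. if \<psi> \<in> \<mu> then 1 else 0) d \<sigma>
       = of_nat (card {f\<in>Hom c d. \<exists>\<psi>\<in>\<mu>. cmp \<sigma> f = cmp f \<psi>}) / of_nat (card (Hom c c))"
proof -
  have "induced_term c (\<lambda>\<psi>. if \<psi> \<in> \<mu> then 1 else 0) \<sigma> f = (if \<exists>\<psi>\<in>\<mu>. cmp \<sigma> f = cmp f \<psi> then 1 else 0)"
    if f: "f \<in> Hom c d" for f
  proof (cases "\<exists>\<psi>\<in>Hom c c. cmp \<sigma> f = cmp f \<psi>")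
    case True
    then obtain p where p: "p \<in> Hom c c" "cmp \<sigma> f = cmp f p" by blast
    have "(\<exists>\<psi>\<in>\<mu>. cmp \<sigma> f = cmp f \<psi>) \<longleftrightarrow> p \<in> \<mu>"
      using p \<mu> mono_cancel[OF c d c f, of p] by auto
    then show ?thesis using the_aut_eq[OF c d f p] p Aut_eq_Hom[OF c] by (auto simp: induced_term_def)
  next
    case False
    then show ?thesis using \<mu> Aut_eq_Hom[OF c] by (auto simp: induced_term_def)
  qed
  then have "(\<Sum>f\<in>Hom c d. induced_term c (\<lambda>\<psi>. if \<psi> \<in> \<mu> then 1 else 0) \<sigma> f)
      = of_nat (card {f\<in>Hom c d. \<exists>\<psi>\<in>\<mu>. cmp \<sigma> f = cmp f \<psi>})"
    using finite_Hom[OF c d] by (simp add: sum.If_cases Int_def)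
  then show ?thesis using Aut_eq_Hom[OF c] by (simp add: induced_def)
qed

lemma card_union_precomp_orbits:
  assumes c: "c \<in> Ob" and d: "d \<in> Ob" and A: "A \<subseteq> Hom c d"
    and closed: "\<And>f. f \<in> A \<Longrightarrow> precomp_orbit c f \<subseteq> A"
  shows "card A = card (Hom c c) * card (precomp_orbit c ` A)"
proof -
  have A_Hom: "f \<in> Hom c d" if "f \<in> A" for f using A that by (rule subsetD)
  have finite_A: "finite A" using finite_subset[OF A finite_Hom[OF c d]] .
  have union: "\<Union>(precomp_orbit c ` A) = A"
  proof
    show "\<Union>(precomp_orbit c ` A) \<subseteq> A" using closed by blast
    show "A \<subseteq> \<Union>(precomp_orbit c ` A)"
    proof
      fix f assume "f \<in> A"
      then show "f \<in> \<Union>(precomp_orbit c ` A)" using self_mem_precomp_orbit[OF c d A_Hom] by blast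
    qed
  qed
  have "card (Hom c c) * card (precomp_orbit c ` A) = card (\<Union>(precomp_orbit c ` A))"
  proof (rule card_partition)
    show "finite (precomp_orbit c ` A)" using finite_A by simp
    show "finite (\<Union>(precomp_orbit c ` A))" using finite_A by (simp add: union)
    show "card B = card (Hom c c)" if "B \<in> precomp_orbit c ` A" for B
      using that card_precomp_orbit[OF c d A_Hom] by blast
    show "B1 \<inter> B2 = {}" if B: "B1 \<in> precomp_orbit c ` A" "B2 \<in> precomp_orbit c ` A" "B1 \<noteq> B2" for B1 B2
    proof (rule ccontr)
      assume "B1 \<inter> B2 \<noteq> {}"
      then obtain g where g: "g \<in> B1" "g \<in> B2" by blast
      obtain f1 f2 where f: "f1 \<in> A" "B1 = precomp_orbit c f1" "f2 \<in> A" "B2 = precomp_orbit c f2"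
        using B(1,2) by blast
      have "B1 = precomp_orbit c g" using precomp_orbit_eq[OF c d A_Hom[OF f(1)]] g(1) f(2) by simp
      moreover have "B2 = precomp_orbit c g" using precomp_orbit_eq[OF c d A_Hom[OF f(3)]] g(2) f(4) by simp
      ultimately show False using B(3) by simp
    qed
  qed
  then show ?thesis using union by simp
qed

lemma binom_set_fixed_eq_image:
  fixes \<mu> :: "'m set" and \<sigma> :: 'm
  assumes c: "c \<in> Ob" and d: "d \<in> Ob"
  defines "A \<equiv> {f\<in>Hom c d. \<exists>\<psi>\<in>\<mu>. cmp \<sigma> f = cmp f \<psi>}"
    and "Bs \<equiv> {B \<in> binom_set C d c. \<exists>f\<in>B. \<exists>\<psi>\<in>\<mu>. cmp \<sigma> f = cmp f \<psi>}"
  shows "Bs = precomp_orbit c ` A"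
proof
  show "Bs \<subseteq> precomp_orbit c ` A"
  proof
    fix B assume "B \<in> Bs"
    then obtain f g \<psi> where f: "f \<in> Hom c d" "B = precomp_orbit c f"
      and g: "g \<in> B" "\<psi> \<in> \<mu>" "cmp \<sigma> g = cmp g \<psi>"
      by (auto simp: Bs_def binom_set_eq_image)
    have "g \<in> Hom c d" using subsetD[OF precomp_orbit_subset[OF c d f(1)]] g(1) f(2) by simp
    then have "g \<in> A" using g by (auto simp: A_def)
    moreover have "B = precomp_orbit c g" using precomp_orbit_eq[OF c d f(1)] g(1) f(2) by simp
    ultimately show "B \<in> precomp_orbit c ` A" by blast
  qed
  show "precomp_orbit c ` A \<subseteq> Bs"
  proof
    fix B assume "B \<in> precomp_orbit c ` A"
    then obtain f \<psi> where "f \<in> Hom c d" "\<psi> \<in> \<mu>" "cmp \<sigma> f = cmp f \<psi>" "B = precomp_orbit c f"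
      by (auto simp: A_def)
    then show "B \<in> Bs"
      using self_mem_precomp_orbit[OF c d] unfolding Bs_def binom_set_eq_image by blast
  qed
qed

text \<open>The orbits \<open>[f] \<in> binom_set C d c\<close> counted by \<open>binomX\<close> partition the set of \<open>f\<close> counted by the
  induced indicator function, and each orbit has \<open>|G\<^sub>c|\<close> elements.\<close>
lemma binomX_eq_induced:
  assumes c: "c \<in> Ob" and d: "d \<in> Ob" and \<psi>0: "\<psi>0 \<in> Hom c c" and \<sigma>: "\<sigma> \<in> Hom d d"
  shows "binomX C c (conj_class C c \<psi>0) d \<sigma> = induced c (\<lambda>\<psi>. if \<psi> \<in> conj_class C c \<psi>0 then 1 else 0) d \<sigma>"
proof -
  let ?\<mu> = "conj_class C c \<psi>0"
  define A where "A = {f\<in>Hom c d. \<exists>\<psi>\<in>?\<mu>. cmp \<sigma> f = cmp f \<psi>}"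
  define Bs where "Bs = {B \<in> binom_set C d c. \<exists>f\<in>B. \<exists>\<psi>\<in>?\<mu>. cmp \<sigma> f = cmp f \<psi>}"
  have Bs: "Bs = precomp_orbit c ` A"
    unfolding A_def Bs_def by (rule binom_set_fixed_eq_image[OF c d])
  have orbit_in_A: "precomp_orbit c f \<subseteq> A" if fA: "f \<in> A" for f
  proof
    fix g assume g: "g \<in> precomp_orbit c f"
    obtain \<psi> where f: "f \<in> Hom c d" "\<psi> \<in> ?\<mu>" "cmp \<sigma> f = cmp f \<psi>" using fA by (auto simp: A_def)
    have "g \<in> Hom c d" using subsetD[OF precomp_orbit_subset[OF c d f(1)] g] .
    then show "g \<in> A" using precomp_orbit_fixed[OF c d \<psi>0 \<sigma> f g] by (simp add: A_def)
  qed
  have "card A = card (Hom c c) * card Bs"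
    using card_union_precomp_orbits[OF c d _ orbit_in_A] Bs by (simp add: A_def)
  moreover have "card (Hom c c) > 0" using finite_Hom[OF c c] id_closed[OF c] card_gt_0_iff by blast
  moreover have "?\<mu> \<subseteq> Hom c c" using Aut_eq_Hom[OF c] by (auto simp: conj_class_def)
  ultimately show ?thesis
    using induced_indicator[OF c d] by (simp add: binomX_def Bs_def[symmetric] A_def[symmetric])
qed


lemma char_poly_eq_sum_induced:
  assumes "char_poly_deg_le C P c"
  obtains n e \<phi> \<alpha> where "\<forall>i<(n::nat). e i \<in> Ob \<and> obj_le C (e i) c \<and> class_fun (e i) (\<phi> i)"
    and "\<forall>d\<in>Ob. \<forall>\<sigma>\<in>Aut C d. P d \<sigma> = (\<Sum>i<n. \<alpha> i * induced (e i) (\<phi> i) d \<sigma>)"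
proof -
  obtain n \<alpha> e \<mu> where P: "\<forall>i<(n::nat). e i \<in> Ob \<and> is_conj_class C (e i) (\<mu> i) \<and> obj_le C (e i) c"
    "\<forall>d\<in>Ob. \<forall>\<sigma>\<in>Aut C d. P d \<sigma> = (\<Sum>i<n. \<alpha> i * binomX C (e i) (\<mu> i) d \<sigma>)"
    using assms unfolding char_poly_deg_le_def by (elim exE conjE) (rule that; assumption)
  define \<psi>0 where "\<psi>0 i = (SOME \<psi>. \<psi> \<in> Aut C (e i) \<and> \<mu> i = conj_class C (e i) \<psi>)" for i
  have \<psi>0: "\<psi>0 i \<in> Hom (e i) (e i) \<and> \<mu> i = conj_class C (e i) (\<psi>0 i)" if "i < n" for i
  proof -
    have ex: "\<exists>\<psi>. \<psi> \<in> Aut C (e i) \<and> \<mu> i = conj_class C (e i) \<psi>"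
      using P(1) that by (auto simp: is_conj_class_def)
    show ?thesis using someI_ex[OF ex] Aut_eq_Hom P(1) that by (simp add: \<psi>0_def)
  qed
  define \<phi> where "\<phi> i = (\<lambda>\<psi>. if \<psi> \<in> \<mu> i then 1 else 0 :: complex)" for i
  show thesis
  proof
    show "\<forall>i<n. e i \<in> Ob \<and> obj_le C (e i) c \<and> class_fun (e i) (\<phi> i)"
    proof (intro allI impI)
      fix i assume i: "i < n"
      then show "e i \<in> Ob \<and> obj_le C (e i) c \<and> class_fun (e i) (\<phi> i)"
        using P(1) \<psi>0[OF i] class_fun_conj_class_indicator[of "e i" "\<psi>0 i"] by (simp add: \<phi>_def)
    qed
    show "\<forall>d\<in>Ob. \<forall>\<sigma>\<in>Aut C d. P d \<sigma> = (\<Sum>i<n. \<alpha> i * induced (e i) (\<phi> i) d \<sigma>)"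
    proof (intro ballI)
      fix d \<sigma> assume d: "d \<in> Ob" and \<sigma>: "\<sigma> \<in> Aut C d"
      have "binomX C (e i) (\<mu> i) d \<sigma> = induced (e i) (\<phi> i) d \<sigma>" if i: "i < n" for i
        using binomX_eq_induced[of "e i" d "\<psi>0 i" \<sigma>] \<psi>0[OF i] P(1) i d \<sigma> Aut_eq_Hom[OF d]
        by (simp add: \<phi>_def)
      then show "P d \<sigma> = (\<Sum>i<n. \<alpha> i * induced (e i) (\<phi> i) d \<sigma>)" using P(2) d \<sigma> by simp
    qed
  qed
qed

lemma ind_char_eq_induced: "ind_char C c \<rho> d \<sigma> = induced c (\<lambda>\<psi>. mtrace (\<rho> \<psi>)) d \<sigma>"
  unfolding ind_char_def induced_def induced_term_def by (rule refl)

theorem inner_char_poly_stable: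
  assumes c: "c1 \<in> Ob" "c2 \<in> Ob" and P: "char_poly_deg_le C P c1" and Q: "char_poly_deg_le C Q c2"
    and d: "d \<in> Ob" "d' \<in> Ob" and ge: "obj_ge_sum C d c1 c2" "obj_ge_sum C d' c1 c2"
  shows "inner_G C P Q d = inner_G C P Q d'"
proof -
  obtain n e \<phi> \<alpha> where e: "\<forall>i<(n::nat). e i \<in> Ob \<and> obj_le C (e i) c1 \<and> class_fun (e i) (\<phi> i)"
    and P_eq: "\<forall>d\<in>Ob. \<forall>\<sigma>\<in>Aut C d. P d \<sigma> = (\<Sum>i<n. \<alpha> i * induced (e i) (\<phi> i) d \<sigma>)"
    by (rule char_poly_eq_sum_induced[OF P])
  obtain m e' \<chi> \<beta> where e': "\<forall>j<(m::nat). e' j \<in> Ob \<and> obj_le C (e' j) c2 \<and> class_fun (e' j) (\<chi> j)"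
    and Q_eq: "\<forall>d\<in>Ob. \<forall>\<sigma>\<in>Aut C d. Q d \<sigma> = (\<Sum>j<m. \<beta> j * induced (e' j) (\<chi> j) d \<sigma>)"
    by (rule char_poly_eq_sum_induced[OF Q])
  have "inner_G C (induced (e i) (\<phi> i)) (induced (e' j) (\<chi> j)) d
      = inner_G C (induced (e i) (\<phi> i)) (induced (e' j) (\<chi> j)) d'" if "i < n" "j < m" for i j
  proof -
    have a: "e i \<in> Ob" "obj_le C (e i) c1" "class_fun (e i) (\<phi> i)" using e that by auto
    have b: "e' j \<in> Ob" "obj_le C (e' j) c2" "class_fun (e' j) (\<chi> j)" using e' that by auto
    show ?thesis using inner_induced_stable[OF a(1) b(1) d c a(2) b(2) ge a(3) b(3)] .
  qed
  moreover have "inner_G C P Q x = (\<Sum>i<n. \<Sum>j<m. \<alpha> i * cnj (\<beta> j) *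
      inner_G C (induced (e i) (\<phi> i)) (induced (e' j) (\<chi> j)) x)" if "x \<in> Ob" for x
    by (rule inner_G_sum) (use P_eq Q_eq that in auto)
  ultimately show ?thesis using d by simp
qed

theorem inner_free_char_nat_mono:
  assumes P: "is_free_char C P" and Q: "is_free_char C Q"
    and d: "d \<in> Ob" "d' \<in> Ob" and le: "obj_le C d d'"
  shows "\<exists>m n::nat. inner_G C P Q d = of_nat m \<and> inner_G C P Q d' = of_nat n \<and> m \<le> n"
proof -
  obtain n e k \<rho> where e: "\<forall>i<(n::nat). e i \<in> Ob \<and> is_rep C (e i) (k i) (\<rho> i)"
    and P_eq: "\<forall>d\<in>Ob. \<forall>\<sigma>\<in>Aut C d. P d \<sigma> = (\<Sum>i<n. induced (e i) (\<lambda>\<psi>. mtrace (\<rho> i \<psi>)) d \<sigma>)"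
    using P unfolding is_free_char_def ind_char_eq_induced by (elim exE conjE) (rule that; assumption)
  obtain m e' k' \<rho>' where e': "\<forall>j<(m::nat). e' j \<in> Ob \<and> is_rep C (e' j) (k' j) (\<rho>' j)"
    and Q_eq: "\<forall>d\<in>Ob. \<forall>\<sigma>\<in>Aut C d. Q d \<sigma> = (\<Sum>j<m. induced (e' j) (\<lambda>\<psi>. mtrace (\<rho>' j \<psi>)) d \<sigma>)"
    using Q unfolding is_free_char_def ind_char_eq_induced by (elim exE conjE) (rule that; assumption)
  let ?T = "\<lambda>x i j. inner_G C (induced (e i) (\<lambda>\<psi>. mtrace (\<rho> i \<psi>))) (induced (e' j) (\<lambda>\<psi>. mtrace (\<rho>' j \<psi>))) x"
  have inner: "inner_G C P Q x = (\<Sum>i<n. \<Sum>j<m. 1 * cnj 1 * ?T x i j)" if x: "x \<in> Ob" for x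
    by (rule inner_G_sum) (use P_eq Q_eq x in auto)
  have Tij: "\<exists>a b::nat. ?T d i j = of_nat a \<and> ?T d' i j = of_nat b \<and> a \<le> b" if "i < n" "j < m" for i j
  proof -
    have "e i \<in> Ob" "is_rep C (e i) (k i) (\<rho> i)" "e' j \<in> Ob" "is_rep C (e' j) (k' j) (\<rho>' j)"
      using e e' that by auto
    from inner_induced_trace_mono[OF this(1,3) d le this(2,4)] show ?thesis .
  qed
  have row: "\<exists>a b::nat. (\<Sum>j<m. ?T d i j) = of_nat a \<and> (\<Sum>j<m. ?T d' i j) = of_nat b \<and> a \<le> b"
    if "i < n" for i
    by (rule sum_of_nat_le_pairs) (simp_all add: Tij[OF that, simplified])
  have "\<exists>a b::nat. (\<Sum>i<n. \<Sum>j<m. ?T d i j) = of_nat a \<and> (\<Sum>i<n. \<Sum>j<m. ?T d' i j) = of_nat b \<and> a \<le> b"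
    by (rule sum_of_nat_le_pairs) (simp_all add: row[simplified])
  then show ?thesis using inner d by simp
qed

end

theorem mainTheorem14:
  fixes C :: "('o, 'm) cat"
    and P Q :: "'o \<Rightarrow> 'm \<Rightarrow> complex"
    and c1 c2 :: 'o
  assumes "FI_type C"
    and "c1 \<in> cOb C" and "c2 \<in> cOb C"
    and "char_poly_deg_le C P c1"
    and "char_poly_deg_le C Q c2"
  shows "(\<forall>d\<in>cOb C. \<forall>d'\<in>cOb C. obj_ge_sum C d c1 c2 \<and> obj_ge_sum C d' c1 c2 \<longrightarrow>
            inner_G C P Q d = inner_G C P Q d')
       \<and> (is_free_char C P \<and> is_free_char C Q \<longrightarrow>
            (\<forall>d\<in>cOb C. \<exists>n::nat. inner_G C P Q d = of_nat n) \<and>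
            (\<forall>d\<in>cOb C. \<forall>d'\<in>cOb C. obj_le C d d' \<longrightarrow>
               (\<exists>m n :: nat. inner_G C P Q d = of_nat m \<and> inner_G C P Q d' = of_nat n \<and> m \<le> n)))"
proof -
  interpret FI_category C by (rule FI_category.intro) (rule assms(1))
  have refl: "obj_le C d d" if "d \<in> cOb C" for d
    using id_closed[OF that] by (auto simp: obj_le_def)
  show ?thesis
  proof (intro conjI impI ballI)
    show "inner_G C P Q d = inner_G C P Q d'"
      if "d \<in> cOb C" "d' \<in> cOb C" "obj_ge_sum C d c1 c2 \<and> obj_ge_sum C d' c1 c2" for d d'
      using that by (intro inner_char_poly_stable[OF assms(2-5)]) auto
    assume free: "is_free_char C P \<and> is_free_char C Q"
    show "\<exists>n::nat. inner_G C P Q d = of_nat n" if "d \<in> cOb C" for d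
      using inner_free_char_nat_mono[of P Q d d] free that refl[OF that] by blast
    show "\<exists>m n::nat. inner_G C P Q d = of_nat m \<and> inner_G C P Q d' = of_nat n \<and> m \<le> n"
      if "d \<in> cOb C" "d' \<in> cOb C" "obj_le C d d'" for d d'
      using inner_free_char_nat_mono[of P Q d d'] free that by blast
  qed
qed

end
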